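(* For any integers $A\ge2$, $H\ge2$ and any $K\ge A^{H-1}$, there exists a POMDP learning problem (a parameter set $\varTheta$, parameterization and prior $\nu^1$) with $S=O=2$ and $|\mathscr A|=A$, horizon $H$, such that every learning algorithm $\phi$ satisfies $$\mathrm{BReg}(\phi,K)\ge\frac1{20}\sqrt{A^{H-1}K}.$$
   Context: A finite-horizon POMDP is a tuple $(\mathscr S,\mathscr A,\mathscr O,H,b_1,T,Z,r)$ with finite state set $\mathscr S$ ($|\mathscr S|=S$), finite action set $\mathscr A$ ($|\mathscr A|=A$), finite observation set $\mathscr O$ ($|\mathscr O|=O$), horizon $H\in\mathbb N$, initial state distribution $b_1\in\Delta(\mathscr S)$, transition kernels $T_h:\mathscr S\times\mathscr A\to\Delta(\mathscr S)$ for $h\in[H-1]$, observation kernels $Z_h:\mathscr S\to\Delta(\mathscr O)$ for $h\in[H]$, and rewards $r_h:\mathscr O\times\mathscr A\to[0,1]$ for $h\in[H]$. A (deterministic) policy $\pi=(\pi_h)_{h=1}^H$ consists of maps $\pi_h:(\mathscr O\times\mathscr A)^{h-1}\times\mathscr O\to\mathscr A$; $\varPi$ is the set of all such policies. A trajectory is $\tau=(o_h,a_h)_{h=1}^H\in\mathscr T:=(\mathscr O\times\mathscr A)^H$. Its probability under $\pi$ is $\Pr^\pi(\tau)=\pi(\tau)\Pr^-(\tau)$, where $\pi(\tau)=\prod_{h=1}^H\mathbf 1\{\pi_h(\tau_{h-1},o_h)=a_h\}$ ($\tau_{h}$ = first $h$ pairs of $\tau$) and $\Pr^-(\tau)=\sum_{s_{1:H}}b_1(s_1)Z_H(o_H\mid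 s_H)\prod_{h=1}^{H-1}Z_h(o_h\mid s_h)T_h(s_{h+1}\mid s_h,a_h)$. The value of $\pi$ is $V^\pi=\sum_\tau\Pr^\pi(\tau)\sum_{h=1}^Hr_h(o_h,a_h)$, and $V^*=\max_{\pi\in\varPi}V^\pi$. Learning setting: $\mathscr S,\mathscr A,\mathscr O,H,r$ are known; $(b_1,T,Z)$ depends on an unknown parameter $\theta$ in a known set $\varTheta$ via a known parameterization; subscripts $\theta$ denote quantities of the POMDP with parameter $\theta$. The true parameter $\theta^*$ is random with prior $\nu^1\in\Delta(\varTheta)$. In episodes $k=1,2,\dots$, with data $\mathcal D_k=(\tau^j,\pi^j)_{j=1}^{k-1}$, a learning algorithm $\phi=(\phi_k)_k$ draws $\pi^k\sim\phi_k(\mathcal D_k)\in\Delta(\varPi)$, applies it for the whole episode and observes $\tau^k\sim\Pr^{\pi^k}_{\theta^*}$. The Bayesian regret is $\mathrm{BReg}(\phi,K)=\mathbb E^\phi\big[\sum_{k=1}^K(V^*_{\theta^*}-V^{\pi^k}_{\theta^*})\big]$. *)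

theory Defs
  imports "HOL-Probability.Probability"
begin

text \<open>States are 0..<S, actions 0..<A, observations 0..<nO.
  Steps are indexed 0..<H (step h here is step h+1 in the paper).
  A trajectory is a list of (observation, action) pairs of length H.
  A policy is a single function pi hist o, where hist is the list of the
  previous (o,a) pairs (its length determines the step) and o is the
  current observation; pi_h(tau_{h-1}, o_h) = pi tau_{h-1} o_h.\<close>

type_synonym traj = "(nat \<times> nat) list"
type_synonym policy = "(nat \<times> nat) list \<Rightarrow> nat \<Rightarrow> nat"
type_synonym data = "(traj \<times> policy) list"

text \<open>The POMDP part depending on the parameter: (b1, T, Z).
  trans h s a s' = T_h(s' | s, a);  obsk h s o = Z_h(o | s).\<close>
record model =
  init :: "nat \<Rightarrow> real"
  trans :: "nat \<Rightarrow> nat \<Rightarrow> nat \<Rightarrow> nat \<Rightarrow> real"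
  obsk :: "nat \<Rightarrow> nat \<Rightarrow> nat \<Rightarrow> real"

definition is_dist :: "nat \<Rightarrow> (nat \<Rightarrow> real) \<Rightarrow> bool" where
  "is_dist n p \<longleftrightarrow> (\<forall>i<n. p i \<ge> 0) \<and> (\<Sum>i<n. p i) = 1"

definition valid_model :: "nat \<Rightarrow> nat \<Rightarrow> nat \<Rightarrow> nat \<Rightarrow> model \<Rightarrow> bool" where
  "valid_model S nO A H M \<longleftrightarrow>
     is_dist S (init M) \<and>
     (\<forall>h<H - 1. \<forall>s<S. \<forall>a<A. is_dist S (trans M h s a)) \<and>
     (\<forall>h<H. \<forall>s<S. is_dist nO (obsk M h s))"

definition valid_rewards :: "nat \<Rightarrow> nat \<Rightarrow> nat \<Rightarrow> (nat \<Rightarrow> nat \<Rightarrow> nat \<Rightarrow> real) \<Rightarrow> bool" where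
  "valid_rewards nO A H r \<longleftrightarrow> (\<forall>h<H. \<forall>ob<nO. \<forall>a<A. 0 \<le> r h ob a \<and> r h ob a \<le> 1)"

definition policies :: "nat \<Rightarrow> policy set" where
  "policies A = {\<pi>. \<forall>hist ob. \<pi> hist ob < A}"

definition trajs :: "nat \<Rightarrow> nat \<Rightarrow> nat \<Rightarrow> traj set" where
  "trajs nO A H = {\<tau>. length \<tau> = H \<and> set \<tau> \<subseteq> {0..<nO} \<times> {0..<A}}"

definition state_seqs :: "nat \<Rightarrow> nat \<Rightarrow> nat list set" where
  "state_seqs S H = {ss. length ss = H \<and> set ss \<subseteq> {0..<S}}"

definition traj_prob_minus :: "nat \<Rightarrow> nat \<Rightarrow> model \<Rightarrow> traj \<Rightarrow> real" where
  "traj_prob_minus S H M \<tau> =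
     (\<Sum>ss\<in>state_seqs S H.
        init M (ss ! 0)
        * (\<Prod>h<H. obsk M h (ss ! h) (fst (\<tau> ! h)))
        * (\<Prod>h<H - 1. trans M h (ss ! h) (snd (\<tau> ! h)) (ss ! Suc h)))"

definition pol_ind :: "nat \<Rightarrow> policy \<Rightarrow> traj \<Rightarrow> real" where
  "pol_ind H \<pi> \<tau> = (\<Prod>h<H. if \<pi> (take h \<tau>) (fst (\<tau> ! h)) = snd (\<tau> ! h) then 1 else 0)"

definition traj_prob :: "nat \<Rightarrow> nat \<Rightarrow> model \<Rightarrow> policy \<Rightarrow> traj \<Rightarrow> real" where
  "traj_prob S H M \<pi> \<tau> = pol_ind H \<pi> \<tau> * traj_prob_minus S H M \<tau>"

definition pvalue :: "nat \<Rightarrow> nat \<Rightarrow> nat \<Rightarrow> nat \<Rightarrow> (nat \<Rightarrow> nat \<Rightarrow> nat \<Rightarrow> real) \<Rightarrow> model \<Rightarrow> policy \<Rightarrow> real" where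
  "pvalue S nO A H r M \<pi> =
     (\<Sum>\<tau>\<in>trajs nO A H. traj_prob S H M \<pi> \<tau> * (\<Sum>h<H. r h (fst (\<tau> ! h)) (snd (\<tau> ! h))))"

text \<open>V^* = max over policies (the supremum is attained)\<close>
definition opt_value :: "nat \<Rightarrow> nat \<Rightarrow> nat \<Rightarrow> nat \<Rightarrow> (nat \<Rightarrow> nat \<Rightarrow> nat \<Rightarrow> real) \<Rightarrow> model \<Rightarrow> real" where
  "opt_value S nO A H r M = (SUP \<pi>\<in>policies A. pvalue S nO A H r M \<pi>)"

text \<open>A learning algorithm: phi k D_k is a distribution over policies
  (episode index k starts at 1).\<close>
definition learning_alg :: "nat \<Rightarrow> (nat \<Rightarrow> data \<Rightarrow> policy pmf) \<Rightarrow> bool" where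
  "learning_alg A \<phi> \<longleftrightarrow> (\<forall>k D. set_pmf (\<phi> k D) \<subseteq> policies A)"

text \<open>Expected regret of the remaining n episodes, starting at episode k with data D,
  for the fixed true model M.\<close>
primrec regret_from ::
  "nat \<Rightarrow> nat \<Rightarrow> nat \<Rightarrow> nat \<Rightarrow> (nat \<Rightarrow> nat \<Rightarrow> nat \<Rightarrow> real) \<Rightarrow> model
   \<Rightarrow> (nat \<Rightarrow> data \<Rightarrow> policy pmf) \<Rightarrow> nat \<Rightarrow> nat \<Rightarrow> data \<Rightarrow> real" where
  "regret_from S nO A H r M \<phi> 0 k D = 0"
| "regret_from S nO A H r M \<phi> (Suc n) k D =
     measure_pmf.expectation (\<phi> k D)
       (\<lambda>\<pi>. (opt_value S nO A H r M - pvalue S nO A H r M \<pi>)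
             + (\<Sum>\<tau>\<in>trajs nO A H. traj_prob S H M \<pi> \<tau> *
                   regret_from S nO A H r M \<phi> n (Suc k) (D @ [(\<tau>, \<pi>)])))"

definition BReg ::
  "nat \<Rightarrow> nat \<Rightarrow> nat \<Rightarrow> nat \<Rightarrow> (nat \<Rightarrow> nat \<Rightarrow> nat \<Rightarrow> real) \<Rightarrow> ('t \<Rightarrow> model) \<Rightarrow> 't pmf
   \<Rightarrow> (nat \<Rightarrow> data \<Rightarrow> policy pmf) \<Rightarrow> nat \<Rightarrow> real" where
  "BReg S nO A H r par prior \<phi> K =
     measure_pmf.expectation prior (\<lambda>\<theta>. regret_from S nO A H r (par \<theta>) \<phi> K 1 [])"

end

theory Submission
  imports Defs
begin

text \<open>The hard instance is a combination lock. A hidden code in \<open>[A]\<^sup>H\<^sup>-\<^sup>1\<close> is drawn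
  uniformly; the hidden state stays \<open>1\<close> as long as the actions follow the code, every
  observation but the last is \<open>0\<close>, and the last observation, which is the only reward, is \<open>1\<close>
  with probability \<open>1/2 + \<epsilon>\<close> in state \<open>1\<close> and \<open>1/2 - \<epsilon>\<close> otherwise. Against any policy this is
  a Bernoulli bandit with \<open>N = A\<^sup>H\<^sup>-\<^sup>1\<close> arms, and the regret under a code is \<open>2 \<epsilon>\<close> times
  the number of episodes that do not play it.

  A change of measure to a reference model that does not depend on the code bounds the
  expected plays of the code by the reference plays plus \<open>K/2 (KL/(2c) + 2c)\<close>, where KL is
  the expected cumulative Kullback-Leibler divergence of the observed data (a Hellinger-type
  estimate, with Jensen's inequality \<open>E[\<surd>W] \<ge> exp (E[ln W] / 2)\<close> for the likelihood ratio
  \<open>W\<close>). The reference plays of all codes add up to at most \<open>K\<close>, so averaging over the prior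
  and choosing \<open>\<epsilon> \<approx> \<surd>(N/K)\<close> gives regret at least \<open>\<surd>(N K) / 20\<close>. For \<open>N \<ge> 3\<close> the
  reference lets every code succeed with probability \<open>1/2 - \<epsilon>\<close>; for \<open>N = 2\<close> this is too
  lossy and the reference succeeds with probability \<open>1/2\<close>.\<close>

section \<open>Expectations over probability mass functions\<close>

lemma integrable_measure_pmf_bounded:
  assumes "\<And>x. x \<in> set_pmf p \<Longrightarrow> \<bar>f x\<bar> \<le> B"
  shows "integrable (measure_pmf p) (f :: _ \<Rightarrow> real)"
  by (rule measure_pmf.integrable_const_bound[where B=B]) (auto simp: AE_measure_pmf_iff assms)

lemma expectation_pmf_cong:
  assumes "\<And>x. x \<in> set_pmf p \<Longrightarrow> f x = g x"
  shows "measure_pmf.expectation p f = measure_pmf.expectation p (g :: _ \<Rightarrow> real)"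
  by (rule integral_cong_AE) (auto simp: AE_measure_pmf_iff assms)

lemma expectation_pmf_mono:
  assumes "integrable (measure_pmf p) f" "integrable (measure_pmf p) g"
    and "\<And>x. x \<in> set_pmf p \<Longrightarrow> f x \<le> (g x :: real)"
  shows "measure_pmf.expectation p f \<le> measure_pmf.expectation p g"
  by (rule integral_mono_AE) (auto simp: AE_measure_pmf_iff assms)

lemma abs_expectation_pmf_le:
  assumes "\<And>x. x \<in> set_pmf p \<Longrightarrow> \<bar>f x\<bar> \<le> (B::real)"
  shows "\<bar>measure_pmf.expectation p f\<bar> \<le> B"
proof -
  have f: "integrable (measure_pmf p) f" using integrable_measure_pmf_bounded assms by blast
  have "measure_pmf.expectation p f \<le> measure_pmf.expectation p (\<lambda>_. B)"
    by (rule expectation_pmf_mono[OF f]) (use assms abs_le_D1 in auto)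
  moreover have "measure_pmf.expectation p (\<lambda>_. - B) \<le> measure_pmf.expectation p f"
    by (rule expectation_pmf_mono[OF _ f]) (use assms abs_le_D2 in force)+
  ultimately show ?thesis by simp
qed

section \<open>Expected statistics of the data collected by a learning algorithm\<close>

text \<open>\<open>run_expect \<phi> Tr P g n k D\<close> is the expectation of \<open>g\<close> evaluated on the data after
  \<open>n\<close> further episodes \<open>k, k+1, \<dots>\<close>, starting from data \<open>D\<close>, when the trajectory of an
  episode played with policy \<open>\<pi>\<close> is distributed as \<open>P \<pi>\<close> on \<open>Tr\<close>.\<close>

primrec run_expect :: "(nat \<Rightarrow> data \<Rightarrow> policy pmf) \<Rightarrow> traj set \<Rightarrow> (policy \<Rightarrow> traj \<Rightarrow> real)
   \<Rightarrow> (data \<Rightarrow> real) \<Rightarrow> nat \<Rightarrow> nat \<Rightarrow> data \<Rightarrow> real" where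
  "run_expect \<phi> Tr P g 0 k D = g D"
| "run_expect \<phi> Tr P g (Suc n) k D = measure_pmf.expectation (\<phi> k D)
      (\<lambda>\<pi>. \<Sum>\<tau>\<in>Tr. P \<pi> \<tau> * run_expect \<phi> Tr P g n (Suc k) (D @ [(\<tau>, \<pi>)]))"

definition traj_kernel :: "nat \<Rightarrow> traj set \<Rightarrow> (policy \<Rightarrow> traj \<Rightarrow> real) \<Rightarrow> bool" where
  "traj_kernel A Tr P \<longleftrightarrow> finite Tr \<and> (\<forall>\<pi>\<in>policies A. (\<forall>\<tau>\<in>Tr. 0 \<le> P \<pi> \<tau>) \<and> sum (P \<pi>) Tr = 1)"

text \<open>Cumulative statistics of the data are unbounded, but bounded on data of each fixed
  length, which is all that integrability against the policy distributions requires.\<close>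

definition bounded_per_length :: "(data \<Rightarrow> real) \<Rightarrow> bool" where
  "bounded_per_length f \<longleftrightarrow> (\<forall>m. \<exists>B. \<forall>D. length D = m \<longrightarrow> \<bar>f D\<bar> \<le> B)"

lemma learning_alg_policy: "learning_alg A \<phi> \<Longrightarrow> \<pi> \<in> set_pmf (\<phi> k D) \<Longrightarrow> \<pi> \<in> policies A"
  unfolding learning_alg_def by blast

lemma traj_kernel_sum_one: "traj_kernel A Tr P \<Longrightarrow> \<pi> \<in> policies A \<Longrightarrow> sum (P \<pi>) Tr = 1"
  unfolding traj_kernel_def by blast

lemma traj_kernel_nonneg: "traj_kernel A Tr P \<Longrightarrow> \<pi> \<in> policies A \<Longrightarrow> \<tau> \<in> Tr \<Longrightarrow> 0 \<le> P \<pi> \<tau>"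
  unfolding traj_kernel_def by blast

lemma abs_traj_kernel_sum_le:
  assumes "traj_kernel A Tr P" "\<pi> \<in> policies A" "\<And>\<tau>. \<tau> \<in> Tr \<Longrightarrow> \<bar>G \<tau>\<bar> \<le> B"
  shows "\<bar>\<Sum>\<tau>\<in>Tr. P \<pi> \<tau> * G \<tau>\<bar> \<le> B"
proof -
  have "\<bar>\<Sum>\<tau>\<in>Tr. P \<pi> \<tau> * G \<tau>\<bar> \<le> (\<Sum>\<tau>\<in>Tr. \<bar>P \<pi> \<tau> * G \<tau>\<bar>)" by (rule sum_abs)
  also have "\<dots> \<le> (\<Sum>\<tau>\<in>Tr. P \<pi> \<tau> * B)"
    using assms by (intro sum_mono) (auto simp: abs_mult traj_kernel_nonneg intro: mult_left_mono)
  also have "\<dots> = B" using assms by (simp add: sum_distrib_right[symmetric] traj_kernel_sum_one)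
  finally show ?thesis .
qed

lemma integrable_traj_kernel_step:
  assumes "traj_kernel A Tr P" "learning_alg A \<phi>" "bounded_per_length G"
  shows "integrable (measure_pmf (\<phi> k D)) (\<lambda>\<pi>. \<Sum>\<tau>\<in>Tr. P \<pi> \<tau> * G (D @ [(\<tau>, \<pi>)]))"
proof -
  obtain B where B: "\<And>D'. length D' = Suc (length D) \<Longrightarrow> \<bar>G D'\<bar> \<le> B"
    using assms(3) unfolding bounded_per_length_def by metis
  show ?thesis
    by (rule integrable_measure_pmf_bounded[where B=B], rule abs_traj_kernel_sum_le[OF assms(1)])
       (auto intro: learning_alg_policy[OF assms(2)] B)
qed

lemma abs_run_expect_le:
  assumes "traj_kernel A Tr P" "learning_alg A \<phi>"
    and "\<And>D'. length D' = length D + n \<Longrightarrow> \<bar>g D'\<bar> \<le> B"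
  shows "\<bar>run_expect \<phi> Tr P g n k D\<bar> \<le> B"
  using assms(3)
proof (induction n arbitrary: k D)
  case (Suc n)
  have "\<bar>run_expect \<phi> Tr P g n (Suc k) (D @ [(\<tau>, \<pi>)])\<bar> \<le> B" for \<tau> \<pi>
    by (rule Suc.IH) (rule Suc.prems, simp)
  then show ?case
    by (simp, intro abs_expectation_pmf_le abs_traj_kernel_sum_le[OF assms(1)])
       (auto intro: learning_alg_policy[OF assms(2)])
qed simp

lemma bounded_per_length_run_expect:
  assumes "traj_kernel A Tr P" "learning_alg A \<phi>" "bounded_per_length g"
  shows "bounded_per_length (\<lambda>D. run_expect \<phi> Tr P g n k D)"
  unfolding bounded_per_length_def
proof
  fix m
  obtain B where "\<And>D. length D = m + n \<Longrightarrow> \<bar>g D\<bar> \<le> B"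
    using assms(3) unfolding bounded_per_length_def by metis
  then show "\<exists>B. \<forall>D. length D = m \<longrightarrow> \<bar>run_expect \<phi> Tr P g n k D\<bar> \<le> B"
    using abs_run_expect_le[OF assms(1,2)] by metis
qed

lemma run_expect_cong:
  assumes "\<And>D'. length D' = length D + n \<Longrightarrow> f D' = g D'"
  shows "run_expect \<phi> Tr P f n k D = run_expect \<phi> Tr P g n k D"
  using assms
proof (induction n arbitrary: k D)
  case (Suc n)
  show ?case by (simp, rule expectation_pmf_cong, rule sum.cong) (auto intro!: Suc.IH Suc.prems)
qed simp

lemma run_expect_mono:
  assumes "traj_kernel A Tr P" "learning_alg A \<phi>" "bounded_per_length f" "bounded_per_length g"
    and "\<And>D'. length D' = length D + n \<Longrightarrow> f D' \<le> g D'"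
  shows "run_expect \<phi> Tr P f n k D \<le> run_expect \<phi> Tr P g n k D"
  using assms(5)
proof (induction n arbitrary: k D)
  case (Suc n)
  have int: "integrable (measure_pmf (\<phi> k D))
      (\<lambda>\<pi>. \<Sum>\<tau>\<in>Tr. P \<pi> \<tau> * run_expect \<phi> Tr P h n (Suc k) (D @ [(\<tau>, \<pi>)]))"
    if "bounded_per_length h" for h
    by (rule integrable_traj_kernel_step[OF assms(1,2) bounded_per_length_run_expect[OF assms(1,2) that]])
  show ?case
    by (simp, rule expectation_pmf_mono[OF int[OF assms(3)] int[OF assms(4)]])
       (auto intro!: sum_mono mult_left_mono Suc.IH Suc.prems traj_kernel_nonneg[OF assms(1)]
         learning_alg_policy[OF assms(2)])
qed simp

lemma run_expect_const:
  assumes "traj_kernel A Tr P" "learning_alg A \<phi>"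
  shows "run_expect \<phi> Tr P (\<lambda>_. c) n k D = c"
proof (induction n arbitrary: k D)
  case (Suc n)
  have "run_expect \<phi> Tr P (\<lambda>_. c) (Suc n) k D = measure_pmf.expectation (\<phi> k D) (\<lambda>_. c)"
    unfolding run_expect.simps Suc
    by (rule expectation_pmf_cong)
       (simp add: sum_distrib_right[symmetric] traj_kernel_sum_one[OF assms(1)]
         learning_alg_policy[OF assms(2)])
  then show ?case by simp
qed simp

lemma run_expect_add:
  assumes "traj_kernel A Tr P" "learning_alg A \<phi>" "bounded_per_length f" "bounded_per_length g"
  shows "run_expect \<phi> Tr P (\<lambda>D. f D + g D) n k D = run_expect \<phi> Tr P f n k D + run_expect \<phi> Tr P g n k D"
proof (induction n arbitrary: k D)
  case (Suc n)
  show ?case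
    by (simp add: Suc distrib_left sum.distrib,
        intro Bochner_Integration.integral_add integrable_traj_kernel_step[OF assms(1,2)]
        bounded_per_length_run_expect[OF assms(1,2)] assms(3,4))
qed simp

lemma run_expect_cmult: "run_expect \<phi> Tr P (\<lambda>D. c * f D) n k D = c * run_expect \<phi> Tr P f n k D"
  by (induction n arbitrary: k D) (simp_all add: sum_distrib_left[symmetric] mult.left_commute)

lemma bounded_per_length_add:
  "bounded_per_length f \<Longrightarrow> bounded_per_length g \<Longrightarrow> bounded_per_length (\<lambda>D. f D + g D)"
  unfolding bounded_per_length_def
  by (metis (no_types, opaque_lifting) abs_triangle_ineq add_mono order_trans)

lemma bounded_per_length_cmult: "bounded_per_length f \<Longrightarrow> bounded_per_length (\<lambda>D. c * f D)"
  unfolding bounded_per_length_def by (metis abs_ge_zero abs_mult mult_left_mono)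

lemma bounded_per_length_const: "bounded_per_length (\<lambda>D. c)"
  unfolding bounded_per_length_def by auto

lemma bounded_per_length_sum:
  "finite I \<Longrightarrow> (\<And>i. i \<in> I \<Longrightarrow> bounded_per_length (f i)) \<Longrightarrow> bounded_per_length (\<lambda>D. \<Sum>i\<in>I. f i D)"
  by (induction I rule: finite_induct) (auto intro: bounded_per_length_add bounded_per_length_const)

lemma bounded_per_length_mult:
  assumes "bounded_per_length f" "bounded_per_length g"
  shows "bounded_per_length (\<lambda>D. f D * g D)"
  unfolding bounded_per_length_def
proof
  fix m
  obtain B1 B2 where "\<And>D. length D = m \<Longrightarrow> \<bar>f D\<bar> \<le> B1" "\<And>D. length D = m \<Longrightarrow> \<bar>g D\<bar> \<le> B2"
    using assms unfolding bounded_per_length_def by metis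
  then have "\<bar>f D * g D\<bar> \<le> B1 * B2" if "length D = m" for D
    using that by (simp add: abs_mult mult_mono')
  then show "\<exists>B. \<forall>D. length D = m \<longrightarrow> \<bar>f D * g D\<bar> \<le> B" by blast
qed

lemma bounded_per_length_exp_half: "bounded_per_length f \<Longrightarrow> bounded_per_length (\<lambda>D. exp (f D / 2))"
  unfolding bounded_per_length_def by (metis abs_exp_cancel abs_le_D1 divide_right_mono exp_le_cancel_iff
      zero_le_numeral)

lemma bounded_per_length_sum_list:
  assumes "\<And>x. \<bar>h x\<bar> \<le> C"
  shows "bounded_per_length (\<lambda>D. \<Sum>x\<leftarrow>D. h x)"
  unfolding bounded_per_length_def
proof
  fix m
  have "\<bar>\<Sum>x\<leftarrow>D. h x\<bar> \<le> real (length D) * C" for D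
  proof (induction D)
    case (Cons x D)
    then show ?case using assms[of x] by (simp add: algebra_simps)
  qed simp
  then show "\<exists>B. \<forall>D. length D = m \<longrightarrow> \<bar>\<Sum>x\<leftarrow>D. h x\<bar> \<le> B"
    by (intro exI[of _ "real m * C"]) auto
qed

lemma run_expect_sum:
  assumes "traj_kernel A Tr P" "learning_alg A \<phi>" "finite I" "\<And>i. i \<in> I \<Longrightarrow> bounded_per_length (f i)"
  shows "run_expect \<phi> Tr P (\<lambda>D. \<Sum>i\<in>I. f i D) n k D = (\<Sum>i\<in>I. run_expect \<phi> Tr P (f i) n k D)"
  using assms(3,4)
  by (induction I rule: finite_induct)
     (simp_all add: run_expect_const[OF assms(1,2)] run_expect_add[OF assms(1,2) _ bounded_per_length_sum])

text \<open>A cumulative sum over the episodes may be replaced by the sum of its conditional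
  expectations given the policies played.\<close>

lemma run_expect_sum_list_conditional:
  assumes K: "traj_kernel A Tr P" and L: "learning_alg A \<phi>"
    and h: "\<And>x. \<bar>h x\<bar> \<le> C" and hb: "\<And>\<pi>. \<bar>hb \<pi>\<bar> \<le> C'"
    and hb_eq: "\<And>\<pi>. \<pi> \<in> policies A \<Longrightarrow> hb \<pi> = (\<Sum>\<tau>\<in>Tr. P \<pi> \<tau> * h (\<tau>, \<pi>))"
  shows "run_expect \<phi> Tr P (\<lambda>D. \<Sum>x\<leftarrow>D. h x) n k D - (\<Sum>x\<leftarrow>D. h x)
       = run_expect \<phi> Tr P (\<lambda>D. \<Sum>x\<leftarrow>D. hb (snd x)) n k D - (\<Sum>x\<leftarrow>D. hb (snd x))"
proof (induction n arbitrary: k D)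
  case (Suc n)
  let ?Eh = "run_expect \<phi> Tr P (\<lambda>D. \<Sum>x\<leftarrow>D. h x) n (Suc k)"
  let ?Eb = "run_expect \<phi> Tr P (\<lambda>D. \<Sum>x\<leftarrow>D. hb (snd x)) n (Suc k)"
  define c where "c = (\<Sum>x\<leftarrow>D. h x) - (\<Sum>x\<leftarrow>D. hb (snd x))"
  have bb: "bounded_per_length (\<lambda>D. \<Sum>x\<leftarrow>D. hb (snd x))"
    by (rule bounded_per_length_sum_list[where C=C']) (rule hb)
  have IH: "?Eh (D @ [(\<tau>, \<pi>)]) = ?Eb (D @ [(\<tau>, \<pi>)]) + c + h (\<tau>, \<pi>) - hb \<pi>" for \<tau> \<pi>
    using Suc.IH[of "Suc k" "D @ [(\<tau>, \<pi>)]"] unfolding c_def by simp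
  have step: "(\<Sum>\<tau>\<in>Tr. P \<pi> \<tau> * ?Eh (D @ [(\<tau>, \<pi>)])) = (\<Sum>\<tau>\<in>Tr. P \<pi> \<tau> * ?Eb (D @ [(\<tau>, \<pi>)])) + c"
    if "\<pi> \<in> set_pmf (\<phi> k D)" for \<pi>
  proof -
    have pol: "\<pi> \<in> policies A" using learning_alg_policy[OF L that] .
    have "(\<Sum>\<tau>\<in>Tr. P \<pi> \<tau> * ?Eh (D @ [(\<tau>, \<pi>)]))
       = (\<Sum>\<tau>\<in>Tr. P \<pi> \<tau> * ?Eb (D @ [(\<tau>, \<pi>)]))
         + c * sum (P \<pi>) Tr + (\<Sum>\<tau>\<in>Tr. P \<pi> \<tau> * h (\<tau>, \<pi>)) - hb \<pi> * sum (P \<pi>) Tr"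
      by (simp add: IH algebra_simps sum.distrib sum_subtractf sum_distrib_left sum_distrib_right)
    then show ?thesis using traj_kernel_sum_one[OF K pol] hb_eq[OF pol] by simp
  qed
  have "run_expect \<phi> Tr P (\<lambda>D. \<Sum>x\<leftarrow>D. h x) (Suc n) k D
      = measure_pmf.expectation (\<phi> k D) (\<lambda>\<pi>. (\<Sum>\<tau>\<in>Tr. P \<pi> \<tau> * ?Eb (D @ [(\<tau>, \<pi>)])) + c)"
    unfolding run_expect.simps by (rule expectation_pmf_cong) (rule step)
  also have "\<dots> = run_expect \<phi> Tr P (\<lambda>D. \<Sum>x\<leftarrow>D. hb (snd x)) (Suc n) k D + c"
    unfolding run_expect.simps
    by (subst Bochner_Integration.integral_add)
       (auto intro: integrable_traj_kernel_step[OF K L bounded_per_length_run_expect[OF K L bb]])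
  finally show ?case unfolding c_def by simp
qed simp

lemma run_expect_reweight:
  assumes "\<And>\<pi> \<tau>. \<pi> \<in> policies A \<Longrightarrow> \<tau> \<in> Tr \<Longrightarrow> P' \<pi> \<tau> = P \<pi> \<tau> * \<rho> \<pi> \<tau>"
    and L: "learning_alg A \<phi>"
  shows "(\<Prod>x\<leftarrow>D. \<rho> (snd x) (fst x)) * run_expect \<phi> Tr P' g n k D
       = run_expect \<phi> Tr P (\<lambda>D. (\<Prod>x\<leftarrow>D. \<rho> (snd x) (fst x)) * g D) n k D"
proof (induction n arbitrary: k D)
  case (Suc n)
  let ?W = "\<lambda>D. \<Prod>x\<leftarrow>D. \<rho> (snd x) (fst x)"
  have "run_expect \<phi> Tr P (\<lambda>D. ?W D * g D) (Suc n) k D = measure_pmf.expectation (\<phi> k D)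
     (\<lambda>\<pi>. ?W D * (\<Sum>\<tau>\<in>Tr. P' \<pi> \<tau> * run_expect \<phi> Tr P' g n (Suc k) (D @ [(\<tau>, \<pi>)])))"
    unfolding run_expect.simps
  proof (rule expectation_pmf_cong)
    fix \<pi> assume "\<pi> \<in> set_pmf (\<phi> k D)"
    then have pol: "\<pi> \<in> policies A" by (rule learning_alg_policy[OF L])
    have "(\<Sum>\<tau>\<in>Tr. P \<pi> \<tau> * run_expect \<phi> Tr P (\<lambda>D. ?W D * g D) n (Suc k) (D @ [(\<tau>, \<pi>)]))
        = (\<Sum>\<tau>\<in>Tr. P \<pi> \<tau> * (?W (D @ [(\<tau>, \<pi>)]) * run_expect \<phi> Tr P' g n (Suc k) (D @ [(\<tau>, \<pi>)])))"
      by (simp only: Suc.IH)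
    also have "\<dots> = ?W D * (\<Sum>\<tau>\<in>Tr. P' \<pi> \<tau> * run_expect \<phi> Tr P' g n (Suc k) (D @ [(\<tau>, \<pi>)]))"
      by (auto simp: sum_distrib_left assms(1) pol mult_ac intro: sum.cong)
    finally show "(\<Sum>\<tau>\<in>Tr. P \<pi> \<tau> * run_expect \<phi> Tr P (\<lambda>D. ?W D * g D) n (Suc k) (D @ [(\<tau>, \<pi>)]))
        = ?W D * (\<Sum>\<tau>\<in>Tr. P' \<pi> \<tau> * run_expect \<phi> Tr P' g n (Suc k) (D @ [(\<tau>, \<pi>)]))" .
  qed
  then show ?case by simp
qed simp

section \<open>A Hellinger-type change of measure\<close>

lemma exp_half_tangent: "exp (m / 2) * (1 + (y - m) / 2) \<le> exp (y / (2::real))"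
proof -
  have "exp (m / 2) * (1 + (y - m) / 2) \<le> exp (m / 2) * exp ((y - m) / 2)"
    by (intro mult_left_mono exp_ge_add_one_self) auto
  also have "\<dots> = exp (y / 2)" by (simp add: exp_add[symmetric] field_simps)
  finally show ?thesis .
qed

lemma tangent_le_traj_kernel_sum_exp_half:
  assumes K: "traj_kernel A Tr P" and \<pi>: "\<pi> \<in> policies A"
  shows "exp (m/2) * (1 - m/2) + exp (m/2) / 2 * (\<Sum>\<tau>\<in>Tr. P \<pi> \<tau> * y \<tau>)
     \<le> (\<Sum>\<tau>\<in>Tr. P \<pi> \<tau> * exp (y \<tau> / 2))"
proof -
  have "exp (m/2) * (1 - m/2) + exp (m/2) / 2 * (\<Sum>\<tau>\<in>Tr. P \<pi> \<tau> * y \<tau>)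
      = exp (m/2) * (1 - m/2) * sum (P \<pi>) Tr + exp (m/2) / 2 * (\<Sum>\<tau>\<in>Tr. P \<pi> \<tau> * y \<tau>)"
    by (simp add: traj_kernel_sum_one[OF K \<pi>])
  also have "\<dots> = (\<Sum>\<tau>\<in>Tr. exp (m/2) * (1 - m/2) * P \<pi> \<tau> + exp (m/2) / 2 * (P \<pi> \<tau> * y \<tau>))"
    by (simp add: sum.distrib sum_distrib_left)
  also have "\<dots> = (\<Sum>\<tau>\<in>Tr. P \<pi> \<tau> * (exp (m / 2) * (1 + (y \<tau> - m) / 2)))"
    by (rule sum.cong) (auto simp: field_simps)
  also have "\<dots> \<le> (\<Sum>\<tau>\<in>Tr. P \<pi> \<tau> * exp (y \<tau> / 2))"
    by (intro sum_mono mult_left_mono exp_half_tangent traj_kernel_nonneg[OF K \<pi>])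
  finally show ?thesis .
qed

text \<open>Jensen's inequality for \<open>run_expect\<close> and the convex function \<open>x \<mapsto> exp (x / 2)\<close>;
  each episode averages the tangent line of this function at the current mean.\<close>

lemma exp_half_run_expect_le:
  assumes K: "traj_kernel A Tr P" and L: "learning_alg A \<phi>" and S: "bounded_per_length S"
  shows "exp (run_expect \<phi> Tr P S n k D / 2) \<le> run_expect \<phi> Tr P (\<lambda>D. exp (S D / 2)) n k D"
proof (induction n arbitrary: k D)
  case (Suc n)
  let ?y = "\<lambda>\<pi> \<tau>. run_expect \<phi> Tr P S n (Suc k) (D @ [(\<tau>, \<pi>)])"
  let ?z = "\<lambda>\<pi> \<tau>. run_expect \<phi> Tr P (\<lambda>D. exp (S D / 2)) n (Suc k) (D @ [(\<tau>, \<pi>)])"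
  let ?F = "\<lambda>\<pi>. \<Sum>\<tau>\<in>Tr. P \<pi> \<tau> * ?y \<pi> \<tau>"
  let ?p = "measure_pmf (\<phi> k D)"
  define m where "m = measure_pmf.expectation (\<phi> k D) ?F"
  have bS: "bounded_per_length (\<lambda>D. run_expect \<phi> Tr P S n (Suc k) D)"
    by (rule bounded_per_length_run_expect[OF K L S])
  have iF: "integrable ?p ?F" by (rule integrable_traj_kernel_step[OF K L bS])
  have iE: "integrable ?p (\<lambda>\<pi>. \<Sum>\<tau>\<in>Tr. P \<pi> \<tau> * exp (?y \<pi> \<tau> / 2))"
    by (rule integrable_traj_kernel_step[OF K L bounded_per_length_exp_half[OF bS]])
  have iZ: "integrable ?p (\<lambda>\<pi>. \<Sum>\<tau>\<in>Tr. P \<pi> \<tau> * ?z \<pi> \<tau>)"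
    by (rule integrable_traj_kernel_step[OF K L
          bounded_per_length_run_expect[OF K L bounded_per_length_exp_half[OF S]]])
  have "exp (m / 2) = measure_pmf.expectation (\<phi> k D) (\<lambda>\<pi>. exp (m/2) * (1 - m/2) + exp (m/2) / 2 * ?F \<pi>)"
    using iF by (simp add: m_def algebra_simps)
  also have "\<dots> \<le> measure_pmf.expectation (\<phi> k D) (\<lambda>\<pi>. \<Sum>\<tau>\<in>Tr. P \<pi> \<tau> * exp (?y \<pi> \<tau> / 2))"
    using iF by (intro expectation_pmf_mono iE tangent_le_traj_kernel_sum_exp_half[OF K]
        learning_alg_policy[OF L]) auto
  also have "\<dots> \<le> measure_pmf.expectation (\<phi> k D) (\<lambda>\<pi>. \<Sum>\<tau>\<in>Tr. P \<pi> \<tau> * ?z \<pi> \<tau>)"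
    by (rule expectation_pmf_mono[OF iE iZ])
       (auto intro!: sum_mono mult_left_mono Suc.IH traj_kernel_nonneg[OF K]
         learning_alg_policy[OF L])
  finally show ?case by (simp add: m_def)
qed simp

text \<open>Pointwise form of the bound below: write \<open>V\<^sup>2 f - f = (V\<^sup>2 - 1) (f - M/2) + M/2 (V\<^sup>2 - 1)\<close>,
  use \<open>\<bar>f - M/2\<bar> \<le> M/2\<close> and \<open>\<bar>V - 1\<bar> (V + 1) \<le> (V - 1)\<^sup>2 / (2 c) + c (V + 1)\<^sup>2 / 2\<close>.\<close>

lemma density_gap_pointwise_le:
  fixes V f M c :: real
  assumes "0 \<le> V" "0 \<le> f" "f \<le> M" "0 < c"
  shows "V^2 * f - f \<le> (M/2 + M/2 * (1/(2*c) + c/2)) * V^2 + (M/2 * (c - 1/c)) * V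
           + (- M/2 + M/2 * (1/(2*c) + c/2))"
proof -
  have "(V^2 - 1) * (f - M/2) \<le> \<bar>V^2 - 1\<bar> * \<bar>f - M/2\<bar>"
    by (metis abs_ge_self abs_mult)
  also have "\<dots> \<le> \<bar>V - 1\<bar> * (V + 1) * (M/2)"
  proof -
    have "V^2 - 1 = (V - 1) * (V + 1)" by (simp add: power2_eq_square algebra_simps)
    then have "\<bar>V^2 - 1\<bar> = \<bar>V - 1\<bar> * (V + 1)" using assms(1) by (simp add: abs_mult)
    moreover have "\<bar>f - M/2\<bar> \<le> M/2" using assms(2,3) by (auto simp: abs_if)
    ultimately show ?thesis
      using mult_left_mono[of "\<bar>f - M/2\<bar>" "M/2" "\<bar>V - 1\<bar> * (V + 1)"] assms(1) by simp
  qed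
  also have "\<dots> \<le> ((V - 1)^2 / (2*c) + c * (V + 1)^2 / 2) * (M/2)"
  proof (rule mult_right_mono)
    have "0 \<le> (\<bar>V - 1\<bar> - c * (V + 1))^2" by simp
    then have "2 * c * (\<bar>V - 1\<bar> * (V + 1)) \<le> (V - 1)^2 + c^2 * (V + 1)^2"
      by (simp add: power2_eq_square algebra_simps)
    then show "\<bar>V - 1\<bar> * (V + 1) \<le> (V - 1)^2 / (2*c) + c * (V + 1)^2 / 2"
      using assms(4) by (simp add: field_simps power2_eq_square)
  qed (use assms in auto)
  moreover have "(M/2 + M/2 * (1/(2*c) + c/2)) * V^2 + (M/2 * (c - 1/c)) * V
           + (- M/2 + M/2 * (1/(2*c) + c/2))
     = (M/2) * (V^2 - 1) + ((V - 1)^2 / (2*c) + c * (V + 1)^2 / 2) * (M/2)"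
    using assms(4) by (simp add: field_simps power2_eq_square)
  moreover have "V^2 * f - f = (V^2 - 1) * (f - M/2) + (M/2) * (V^2 - 1)"
    by (simp add: algebra_simps)
  ultimately show ?thesis by linarith
qed

lemma run_expect_le_one_of_square:
  assumes K: "traj_kernel A Tr P" and L: "learning_alg A \<phi>" and V: "bounded_per_length V"
    and EV2: "run_expect \<phi> Tr P (\<lambda>D. V D ^ 2) n k D = 1"
  shows "run_expect \<phi> Tr P V n k D \<le> 1"
proof -
  let ?E = "\<lambda>g. run_expect \<phi> Tr P g n k D"
  have V2: "bounded_per_length (\<lambda>D. V D ^ 2)"
    using bounded_per_length_mult[OF V V] by (simp add: power2_eq_square)
  have "?E V \<le> ?E (\<lambda>D. 1/2 * V D ^ 2 + 1/2)"
  proof (rule run_expect_mono[OF K L V])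
    show "bounded_per_length (\<lambda>D. 1/2 * V D ^ 2 + 1/2)"
      by (intro bounded_per_length_add bounded_per_length_cmult V2 bounded_per_length_const)
    fix D' :: data
    have "0 \<le> (V D' - 1)^2" by simp
    then show "V D' \<le> 1/2 * V D' ^ 2 + 1/2" by (simp add: power2_eq_square algebra_simps)
  qed
  also have "\<dots> = ?E (\<lambda>D. 1/2 * V D ^ 2) + ?E (\<lambda>D. 1/2)"
    by (rule run_expect_add[OF K L bounded_per_length_cmult[OF V2] bounded_per_length_const])
  also have "\<dots> = 1"
    by (simp only: run_expect_cmult run_expect_const[OF K L] EV2)
  finally show ?thesis .
qed

lemma run_expect_density_gap_le:
  assumes K: "traj_kernel A Tr P" and L: "learning_alg A \<phi>"
    and V: "bounded_per_length V" "\<And>D. 0 \<le> V D"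
    and EV2: "run_expect \<phi> Tr P (\<lambda>D. V D ^ 2) n k [] = 1"
    and f: "bounded_per_length f" "\<And>D. length D = n \<Longrightarrow> 0 \<le> f D \<and> f D \<le> M"
    and c: "0 < c"
  shows "run_expect \<phi> Tr P (\<lambda>D. V D ^ 2 * f D) n k [] - run_expect \<phi> Tr P f n k []
     \<le> M/2 * ((1 - run_expect \<phi> Tr P V n k []) / c + 2 * c)"
proof -
  let ?E = "\<lambda>g. run_expect \<phi> Tr P g n k []"
  define B where "B = ?E V"
  have V2: "bounded_per_length (\<lambda>D. V D ^ 2)"
    using bounded_per_length_mult[OF V(1) V(1)] by (simp add: power2_eq_square)
  have M: "0 \<le> M" using f(2)[of "replicate n undefined"] by auto
  have B1: "B \<le> 1" unfolding B_def by (rule run_expect_le_one_of_square[OF K L V(1) EV2])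
  define \<alpha> where "\<alpha> = M/2 + M/2 * (1/(2*c) + c/2)"
  define \<beta> where "\<beta> = M/2 * (c - 1/c)"
  define \<gamma> where "\<gamma> = - M/2 + M/2 * (1/(2*c) + c/2)"
  have V2f: "bounded_per_length (\<lambda>D. V D ^ 2 * f D)" by (rule bounded_per_length_mult[OF V2 f(1)])
  have "?E (\<lambda>D. V D ^ 2 * f D) - ?E f = ?E (\<lambda>D. V D ^ 2 * f D + (-1) * f D)"
    by (simp only: run_expect_add[OF K L V2f bounded_per_length_cmult[OF f(1)]] run_expect_cmult)
  also have "\<dots> \<le> ?E (\<lambda>D. \<alpha> * V D ^ 2 + \<beta> * V D + \<gamma>)"
  proof (rule run_expect_mono[OF K L])
    show "bounded_per_length (\<lambda>D. V D ^ 2 * f D + (-1) * f D)"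
      by (intro bounded_per_length_add bounded_per_length_cmult V2f f(1))
    show "bounded_per_length (\<lambda>D. \<alpha> * V D ^ 2 + \<beta> * V D + \<gamma>)"
      by (intro bounded_per_length_add bounded_per_length_cmult V2 V(1) bounded_per_length_const)
    fix D' :: data assume "length D' = length [] + n"
    then show "V D' ^ 2 * f D' + (-1) * f D' \<le> \<alpha> * V D' ^ 2 + \<beta> * V D' + \<gamma>"
      unfolding \<alpha>_def \<beta>_def \<gamma>_def using density_gap_pointwise_le[of "V D'" "f D'" M c] V(2) f(2) c
      by simp
  qed
  also have "\<dots> = \<alpha> + \<beta> * B + \<gamma>"
    by (simp add: run_expect_add[OF K L] bounded_per_length_add bounded_per_length_cmult V2 V(1)
        bounded_per_length_const run_expect_cmult run_expect_const[OF K L] EV2 B_def)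
  also have "\<dots> = M/2 * ((1 - B) / c + c * (1 + B))"
    unfolding \<alpha>_def \<beta>_def \<gamma>_def using c by (simp add: field_simps)
  also have "\<dots> \<le> M/2 * ((1 - B) / c + 2 * c)"
    using B1 c M by (intro mult_left_mono add_left_mono) auto
  finally show ?thesis unfolding B_def .
qed

lemma prod_list_eq_exp_sum_list_ln:
  fixes \<rho> :: "'a \<Rightarrow> real"
  assumes "\<And>x. 0 < \<rho> x"
  shows "(\<Prod>x\<leftarrow>D. \<rho> x) = exp (\<Sum>x\<leftarrow>D. ln (\<rho> x))"
  by (induction D) (simp_all add: exp_add assms)

text \<open>If \<open>P' = P \<rho>\<close>, the data likelihood ratio is \<open>W = V\<^sup>2\<close> with \<open>V = exp (S / 2)\<close>, \<open>S\<close> the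
  cumulative log-ratio; then \<open>E[V] \<ge> exp (E[S] / 2) \<ge> 1 + E[S] / 2\<close>.\<close>

lemma run_expect_change_of_measure_le:
  assumes K: "traj_kernel A Tr P" and K': "traj_kernel A Tr P'" and L: "learning_alg A \<phi>"
    and \<rho>: "\<And>\<pi> \<tau>. 0 < \<rho> \<pi> \<tau>" "\<And>\<pi> \<tau>. \<bar>ln (\<rho> \<pi> \<tau>)\<bar> \<le> C"
    and P': "\<And>\<pi> \<tau>. \<pi> \<in> policies A \<Longrightarrow> \<tau> \<in> Tr \<Longrightarrow> P' \<pi> \<tau> = P \<pi> \<tau> * \<rho> \<pi> \<tau>"
    and f: "bounded_per_length f" "\<And>D. length D = n \<Longrightarrow> 0 \<le> f D \<and> f D \<le> M"
    and c: "0 < c"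
  shows "run_expect \<phi> Tr P' f n k [] \<le> run_expect \<phi> Tr P f n k []
     + M/2 * (- run_expect \<phi> Tr P (\<lambda>D. \<Sum>x\<leftarrow>D. ln (\<rho> (snd x) (fst x))) n k [] / (2 * c) + 2 * c)"
proof -
  let ?E = "\<lambda>g. run_expect \<phi> Tr P g n k []"
  define S where "S = (\<lambda>D::data. \<Sum>x\<leftarrow>D. ln (\<rho> (snd x) (fst x)))"
  define V where "V = (\<lambda>D. exp (S D / 2))"
  have bS: "bounded_per_length S" unfolding S_def by (rule bounded_per_length_sum_list) (rule \<rho>(2))
  have bV: "bounded_per_length V" unfolding V_def by (rule bounded_per_length_exp_half[OF bS])
  have W: "(\<Prod>x\<leftarrow>D. \<rho> (snd x) (fst x)) = V D ^ 2" for D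
    unfolding V_def S_def
    by (simp add: prod_list_eq_exp_sum_list_ln \<rho>(1) exp_double[symmetric] del: exp_double)
  have EV2: "?E (\<lambda>D. V D ^ 2) = 1"
    using run_expect_reweight[of A Tr P' P \<rho> \<phi> "[]" "\<lambda>_. 1" n k, OF P' L] run_expect_const[OF K' L] by (simp add: W)
  have M: "0 \<le> M" using f(2)[of "replicate n undefined"] by auto
  have "run_expect \<phi> Tr P' f n k [] - ?E f = ?E (\<lambda>D. V D ^ 2 * f D) - ?E f"
    using run_expect_reweight[of A Tr P' P \<rho> \<phi> "[]" f n k, OF P' L] by (simp add: W)
  also have "\<dots> \<le> M/2 * ((1 - ?E V) / c + 2 * c)"
    by (rule run_expect_density_gap_le[OF K L bV _ EV2 f c]) (simp add: V_def)
  also have "\<dots> \<le> M/2 * (- ?E S / (2 * c) + 2 * c)"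
  proof -
    have "1 + ?E S / 2 \<le> exp (?E S / 2)" by (rule exp_ge_add_one_self)
    also have "\<dots> \<le> ?E V" unfolding V_def by (rule exp_half_run_expect_le[OF K L bS])
    finally have "1 - ?E V \<le> - ?E S / 2" by linarith
    then have "(1 - ?E V) / c \<le> - ?E S / (2 * c)" using divide_right_mono[of _ _ c] c by fastforce
    then show ?thesis using M by (intro mult_left_mono) auto
  qed
  finally show ?thesis unfolding S_def by linarith
qed

lemma regret_from_eq_run_expect:
  assumes K: "traj_kernel A (trajs nO A H) P" and L: "learning_alg A \<phi>"
    and P: "\<And>\<pi> \<tau>. \<pi> \<in> policies A \<Longrightarrow> \<tau> \<in> trajs nO A H \<Longrightarrow> traj_prob S H M \<pi> \<tau> = P \<pi> \<tau>"
    and gap: "\<And>\<pi>. \<pi> \<in> policies A \<Longrightarrow> opt_value S nO A H r M - pvalue S nO A H r M \<pi> = g \<pi>"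
    and g: "\<And>\<pi>. \<bar>g \<pi>\<bar> \<le> C"
  shows "regret_from S nO A H r M \<phi> n k D + (\<Sum>x\<leftarrow>D. g (snd x))
     = run_expect \<phi> (trajs nO A H) P (\<lambda>D. \<Sum>x\<leftarrow>D. g (snd x)) n k D"
proof (induction n arbitrary: k D)
  case (Suc n)
  let ?Tr = "trajs nO A H"
  let ?G = "\<lambda>D. \<Sum>x\<leftarrow>D. g (snd x)"
  let ?E = "run_expect \<phi> ?Tr P ?G n (Suc k)"
  have bG: "bounded_per_length ?G" by (rule bounded_per_length_sum_list[where C=C]) (rule g)
  have step: "opt_value S nO A H r M - pvalue S nO A H r M \<pi>
        + (\<Sum>\<tau>\<in>?Tr. traj_prob S H M \<pi> \<tau> * regret_from S nO A H r M \<phi> n (Suc k) (D @ [(\<tau>, \<pi>)]))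
      = (\<Sum>\<tau>\<in>?Tr. P \<pi> \<tau> * ?E (D @ [(\<tau>, \<pi>)])) - ?G D"
    if "\<pi> \<in> set_pmf (\<phi> k D)" for \<pi>
  proof -
    have pol: "\<pi> \<in> policies A" using learning_alg_policy[OF L that] .
    have IH: "regret_from S nO A H r M \<phi> n (Suc k) (D @ [(\<tau>, \<pi>)]) = ?E (D @ [(\<tau>, \<pi>)]) - ?G D - g \<pi>"
      for \<tau>
      using Suc.IH[of "Suc k" "D @ [(\<tau>, \<pi>)]"] by simp
    have "(\<Sum>\<tau>\<in>?Tr. traj_prob S H M \<pi> \<tau> * regret_from S nO A H r M \<phi> n (Suc k) (D @ [(\<tau>, \<pi>)]))
       = (\<Sum>\<tau>\<in>?Tr. P \<pi> \<tau> * ?E (D @ [(\<tau>, \<pi>)]) - (?G D + g \<pi>) * P \<pi> \<tau>)"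
      by (rule sum.cong) (simp_all add: P[OF pol] IH algebra_simps)
    also have "\<dots> = (\<Sum>\<tau>\<in>?Tr. P \<pi> \<tau> * ?E (D @ [(\<tau>, \<pi>)])) - (?G D + g \<pi>)"
      by (simp add: sum_subtractf sum_distrib_left[symmetric] traj_kernel_sum_one[OF K pol])
    finally show ?thesis using gap[OF pol] by simp
  qed
  have "regret_from S nO A H r M \<phi> (Suc n) k D
      = measure_pmf.expectation (\<phi> k D) (\<lambda>\<pi>. (\<Sum>\<tau>\<in>?Tr. P \<pi> \<tau> * ?E (D @ [(\<tau>, \<pi>)])) + (- ?G D))"
    unfolding regret_from.simps by (rule expectation_pmf_cong) (simp add: step)
  also have "\<dots> = run_expect \<phi> ?Tr P ?G (Suc n) k D - ?G D"
    unfolding run_expect.simps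
    by (subst Bochner_Integration.integral_add)
       (auto intro: integrable_traj_kernel_step[OF K L bounded_per_length_run_expect[OF K L bG]])
  finally show ?case by simp
qed simp

section \<open>Trajectories with silent observations\<close>

primrec zero_hist :: "policy \<Rightarrow> nat \<Rightarrow> traj" where
  "zero_hist \<pi> 0 = []"
| "zero_hist \<pi> (Suc h) = zero_hist \<pi> h @ [(0, \<pi> (zero_hist \<pi> h) 0)]"

definition zero_traj :: "nat \<Rightarrow> policy \<Rightarrow> nat \<Rightarrow> traj" where
  "zero_traj H \<pi> b = zero_hist \<pi> (H - 1) @ [(b, \<pi> (zero_hist \<pi> (H - 1)) b)]"

definition played_code :: "nat \<Rightarrow> policy \<Rightarrow> nat list" where
  "played_code H \<pi> = map snd (zero_hist \<pi> (H - 1))"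

definition final_obs_kernel :: "nat \<Rightarrow> (policy \<Rightarrow> real) \<Rightarrow> policy \<Rightarrow> traj \<Rightarrow> real" where
  "final_obs_kernel H q \<pi> \<tau> =
     (if \<tau> = zero_traj H \<pi> 1 then q \<pi> else if \<tau> = zero_traj H \<pi> 0 then 1 - q \<pi> else 0)"

lemma length_zero_hist [simp]: "length (zero_hist \<pi> h) = h"
  by (induction h) auto

lemma take_zero_hist: "i \<le> h \<Longrightarrow> take i (zero_hist \<pi> h) = zero_hist \<pi> i"
  by (induction h) (auto simp: le_Suc_eq)

lemma nth_zero_hist: "i < h \<Longrightarrow> zero_hist \<pi> h ! i = (0, \<pi> (zero_hist \<pi> i) 0)"
  by (induction h) (auto simp: less_Suc_eq nth_append)

lemma length_zero_traj: "1 \<le> H \<Longrightarrow> length (zero_traj H \<pi> b) = H"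
  by (simp add: zero_traj_def)

lemma zero_traj_eq_iff: "zero_traj H \<pi> a = zero_traj H \<pi> b \<longleftrightarrow> a = b"
  by (auto simp: zero_traj_def)

lemma nth_zero_traj_less: "h < H - 1 \<Longrightarrow> zero_traj H \<pi> b ! h = (0, \<pi> (zero_hist \<pi> h) 0)"
  by (simp add: zero_traj_def nth_append nth_zero_hist)

lemma nth_zero_traj_last: "h = H - 1 \<Longrightarrow> zero_traj H \<pi> b ! h = (b, \<pi> (zero_hist \<pi> h) b)"
  by (simp add: zero_traj_def nth_append)

lemma take_zero_traj: "h \<le> H - 1 \<Longrightarrow> take h (zero_traj H \<pi> b) = zero_hist \<pi> h"
  by (simp add: zero_traj_def take_zero_hist)

lemma zero_traj_in_trajs: "\<pi> \<in> policies A \<Longrightarrow> b < nO \<Longrightarrow> 1 \<le> H \<Longrightarrow> zero_traj H \<pi> b \<in> trajs nO A H"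
  unfolding trajs_def policies_def
  by (auto simp: length_zero_traj zero_traj_def in_set_conv_nth nth_zero_hist)

lemma finite_trajs: "finite (trajs nO A H)"
proof -
  have "trajs nO A H = {xs. set xs \<subseteq> {0..<nO} \<times> {0..<A} \<and> length xs = H}"
    unfolding trajs_def by auto
  then show ?thesis by (simp add: finite_lists_length_eq)
qed

lemma pol_ind_zero_traj: "1 \<le> H \<Longrightarrow> pol_ind H \<pi> (zero_traj H \<pi> b) = 1"
  unfolding pol_ind_def
proof (rule prod.neutral, intro ballI)
  fix h assume "1 \<le> H" "h \<in> {..<H}"
  then consider "h < H - 1" | "h = H - 1" by force
  then show "(if \<pi> (take h (zero_traj H \<pi> b)) (fst (zero_traj H \<pi> b ! h)) = snd (zero_traj H \<pi> b ! h)
      then 1 else 0) = (1::real)"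
    by cases (auto simp: nth_zero_traj_less nth_zero_traj_last take_zero_traj)
qed

lemma consistent_traj_eq_zero_traj:
  assumes len: "length \<tau> = H" and H: "1 \<le> H"
    and pol: "\<And>h. h < H \<Longrightarrow> \<pi> (take h \<tau>) (fst (\<tau> ! h)) = snd (\<tau> ! h)"
    and obs: "\<And>h. h < H - 1 \<Longrightarrow> fst (\<tau> ! h) = 0"
  shows "\<tau> = zero_traj H \<pi> (fst (\<tau> ! (H - 1)))"
proof -
  have hist: "take h \<tau> = zero_hist \<pi> h" if "h \<le> H - 1" for h
    using that
  proof (induction h)
    case (Suc h)
    then have "h < length \<tau>" using len H by simp
    then have "take (Suc h) \<tau> = take h \<tau> @ [(fst (\<tau> ! h), snd (\<tau> ! h))]"
      by (simp add: take_Suc_conv_app_nth)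
    then show ?case using Suc pol[of h] obs[of h] by simp
  qed simp
  have last: "H - 1 < length \<tau>" using len H by simp
  have "\<tau> = take (Suc (H - 1)) \<tau>" using len H by simp
  also have "\<dots> = take (H - 1) \<tau> @ [\<tau> ! (H - 1)]" by (rule take_Suc_conv_app_nth[OF last])
  also have "\<tau> ! (H - 1) = (fst (\<tau> ! (H - 1)), snd (\<tau> ! (H - 1)))" by simp
  also have "snd (\<tau> ! (H - 1)) = \<pi> (zero_hist \<pi> (H - 1)) (fst (\<tau> ! (H - 1)))"
    using pol[of "H - 1"] hist[of "H - 1"] H by simp
  also have "take (H - 1) \<tau> = zero_hist \<pi> (H - 1)" using hist by simp
  finally show ?thesis unfolding zero_traj_def .
qed

lemma final_obs_kernel_zero_traj:
  "final_obs_kernel H q \<pi> (zero_traj H \<pi> b) = (if b = 1 then q \<pi> else if b = 0 then 1 - q \<pi> else 0)"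
  by (simp add: final_obs_kernel_def zero_traj_eq_iff)

lemma sum_final_obs_kernel:
  assumes "\<pi> \<in> policies A" "1 \<le> H"
  shows "(\<Sum>\<tau>\<in>trajs 2 A H. final_obs_kernel H q \<pi> \<tau> * g \<tau>)
       = q \<pi> * g (zero_traj H \<pi> 1) + (1 - q \<pi>) * g (zero_traj H \<pi> 0)"
proof -
  have "(\<Sum>\<tau>\<in>trajs 2 A H. final_obs_kernel H q \<pi> \<tau> * g \<tau>) = (\<Sum>\<tau>\<in>trajs 2 A H.
      (if zero_traj H \<pi> 1 = \<tau> then q \<pi> * g (zero_traj H \<pi> 1) else 0)
      + (if zero_traj H \<pi> 0 = \<tau> then (1 - q \<pi>) * g (zero_traj H \<pi> 0) else 0))"
    by (rule sum.cong) (auto simp: final_obs_kernel_def zero_traj_eq_iff)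
  also have "\<dots> = q \<pi> * g (zero_traj H \<pi> 1) + (1 - q \<pi>) * g (zero_traj H \<pi> 0)"
    using zero_traj_in_trajs[OF assms(1) _ assms(2)] by (simp add: sum.distrib finite_trajs)
  finally show ?thesis .
qed

lemma traj_kernel_final_obs_kernel:
  assumes "\<And>\<pi>. 0 \<le> q \<pi> \<and> q \<pi> \<le> 1" "1 \<le> H"
  shows "traj_kernel A (trajs 2 A H) (final_obs_kernel H q)"
  unfolding traj_kernel_def
proof (intro conjI ballI finite_trajs)
  fix \<pi> assume \<pi>: "\<pi> \<in> policies A"
  show "sum (final_obs_kernel H q \<pi>) (trajs 2 A H) = 1"
    using sum_final_obs_kernel[OF \<pi> assms(2), of q "\<lambda>_. 1"] by simp
  fix \<tau> show "0 \<le> final_obs_kernel H q \<pi> \<tau>" using assms(1)[of \<pi>] by (simp add: final_obs_kernel_def)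
qed

section \<open>The combination lock\<close>

definition lock_model :: "nat \<Rightarrow> real \<Rightarrow> nat list \<Rightarrow> model" where
  "lock_model H \<epsilon> code = \<lparr>init = (\<lambda>s. if s = 1 then 1 else 0),
    trans = (\<lambda>h s a s'. if s' = (if s = 1 \<and> a = code ! h then 1 else 0) then 1 else 0),
    obsk = (\<lambda>h s ob. if h < H - 1 then (if ob = 0 then 1 else 0)
       else if ob = 1 then (if s = 1 then 1/2 + \<epsilon> else 1/2 - \<epsilon>)
       else (if s = 1 then 1/2 - \<epsilon> else 1/2 + \<epsilon>))\<rparr>"

primrec lock_state :: "nat list \<Rightarrow> traj \<Rightarrow> nat \<Rightarrow> nat" where
  "lock_state code \<tau> 0 = 1"
| "lock_state code \<tau> (Suc h) = (if lock_state code \<tau> h = 1 \<and> snd (\<tau> ! h) = code ! h then 1 else 0)"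

definition lock_success :: "nat \<Rightarrow> real \<Rightarrow> nat list \<Rightarrow> policy \<Rightarrow> real" where
  "lock_success H \<epsilon> code \<pi> = (if played_code H \<pi> = code then 1/2 + \<epsilon> else 1/2 - \<epsilon>)"

definition final_obs_reward :: "nat \<Rightarrow> nat \<Rightarrow> nat \<Rightarrow> nat \<Rightarrow> real" where
  "final_obs_reward H h ob a = (if h = H - 1 \<and> ob = 1 then 1 else 0)"

definition codes :: "nat \<Rightarrow> nat \<Rightarrow> nat list set" where
  "codes A H = {xs. set xs \<subseteq> {0..<A} \<and> length xs = H - 1}"

definition code_policy :: "nat \<Rightarrow> nat list \<Rightarrow> policy" where
  "code_policy H code = (\<lambda>hist ob. if length hist < H - 1 then code ! length hist else 0)"

lemma lock_state_less_2: "lock_state code \<tau> h < 2"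
  by (cases h) auto

lemma lock_state_eq: "lock_state code \<tau> h = (if \<forall>i<h. snd (\<tau> ! i) = code ! i then 1 else 0)"
  by (induction h) (auto simp: less_Suc_eq)

lemma lock_state_zero_traj:
  assumes "length code = H - 1"
  shows "h = H - 1 \<Longrightarrow> lock_state code (zero_traj H \<pi> b) h = (if played_code H \<pi> = code then 1 else 0)"
proof -
  assume "h = H - 1"
  have "(\<forall>i<H - 1. snd (zero_traj H \<pi> b ! i) = code ! i) \<longleftrightarrow> played_code H \<pi> = code"
    using assms by (auto simp: nth_zero_traj_less played_code_def list_eq_iff_nth_eq nth_zero_hist)
  then show ?thesis using \<open>h = H - 1\<close> by (simp add: lock_state_eq)
qed

lemma valid_lock_model: "0 \<le> \<epsilon> \<Longrightarrow> \<epsilon> \<le> 1/2 \<Longrightarrow> valid_model 2 2 A H (lock_model H \<epsilon> code)"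
  unfolding valid_model_def is_dist_def lock_model_def
  by (auto simp: numeral_2_eq_2 lessThan_Suc less_Suc_eq)

lemma valid_final_obs_reward: "valid_rewards 2 A H (final_obs_reward H)"
  unfolding valid_rewards_def final_obs_reward_def by auto

text \<open>The lock is deterministic: only the state sequence \<open>lock_state code \<tau>\<close> has positive weight.\<close>

lemma lock_path_weight_eq_zero:
  assumes len: "length ss = H" and ss: "ss \<noteq> map (lock_state code \<tau>) [0..<H]"
  shows "init (lock_model H \<epsilon> code) (ss ! 0) * (\<Prod>h<H. obsk (lock_model H \<epsilon> code) h (ss ! h) (fst (\<tau> ! h)))
       * (\<Prod>h<H - 1. trans (lock_model H \<epsilon> code) h (ss ! h) (snd (\<tau> ! h)) (ss ! Suc h)) = 0"
proof -
  have "\<exists>h<H. ss ! h \<noteq> lock_state code \<tau> h"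
  proof (rule ccontr)
    assume "\<not> ?thesis"
    then have "ss = map (lock_state code \<tau>) [0..<H]" by (intro nth_equalityI) (auto simp: len)
    then show False using ss by simp
  qed
  then obtain h where h: "h < H" "ss ! h \<noteq> lock_state code \<tau> h"
    and before: "\<And>i. i < h \<Longrightarrow> ss ! i = lock_state code \<tau> i"
    using exists_least_iff[of "\<lambda>h. h < H \<and> ss ! h \<noteq> lock_state code \<tau> h"] by (metis less_trans)
  show ?thesis
  proof (cases h)
    case 0
    then show ?thesis using h by (simp add: lock_model_def)
  next
    case (Suc h')
    then have "trans (lock_model H \<epsilon> code) h' (ss ! h') (snd (\<tau> ! h')) (ss ! Suc h') = 0"
      using before[of h'] h by (simp add: lock_model_def)
    then have "(\<Prod>h<H - 1. trans (lock_model H \<epsilon> code) h (ss ! h) (snd (\<tau> ! h)) (ss ! Suc h)) = 0"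
      using h Suc by (intro prod_zero) auto
    then show ?thesis by simp
  qed
qed

lemma traj_prob_minus_lock_model:
  assumes H: "1 \<le> H"
  shows "traj_prob_minus 2 H (lock_model H \<epsilon> code) \<tau>
       = (\<Prod>h<H. obsk (lock_model H \<epsilon> code) h (lock_state code \<tau> h) (fst (\<tau> ! h)))"
proof -
  let ?M = "lock_model H \<epsilon> code"
  define ss0 where "ss0 = map (lock_state code \<tau>) [0..<H]"
  define g where "g = (\<lambda>ss. init ?M (ss ! 0) * (\<Prod>h<H. obsk ?M h (ss ! h) (fst (\<tau> ! h)))
        * (\<Prod>h<H - 1. trans ?M h (ss ! h) (snd (\<tau> ! h)) (ss ! Suc h)))"
  have "state_seqs 2 H = {xs. set xs \<subseteq> {0..<2} \<and> length xs = H}" unfolding state_seqs_def by auto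
  then have fin: "finite (state_seqs 2 H)" by (simp add: finite_lists_length_eq)
  have ss0: "ss0 \<in> state_seqs 2 H" unfolding state_seqs_def ss0_def using lock_state_less_2 by auto
  have "g ss = 0" if "ss \<in> state_seqs 2 H" "ss \<noteq> ss0" for ss
    using that lock_path_weight_eq_zero unfolding g_def ss0_def state_seqs_def by blast
  then have "traj_prob_minus 2 H ?M \<tau> = g ss0"
    unfolding traj_prob_minus_def g_def[symmetric] by (simp add: sum.remove[OF fin ss0] sum.neutral)
  also have "\<dots> = (\<Prod>h<H. obsk ?M h (lock_state code \<tau> h) (fst (\<tau> ! h)))"
  proof -
    have "init ?M (ss0 ! 0) = 1" using H by (simp add: ss0_def lock_model_def)
    moreover have "(\<Prod>h<H. obsk ?M h (ss0 ! h) (fst (\<tau> ! h)))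
        = (\<Prod>h<H. obsk ?M h (lock_state code \<tau> h) (fst (\<tau> ! h)))"
      by (rule prod.cong) (auto simp: ss0_def)
    moreover have "(\<Prod>h<H - 1. trans ?M h (ss0 ! h) (snd (\<tau> ! h)) (ss0 ! Suc h)) = 1"
      by (rule prod.neutral) (auto simp: ss0_def lock_model_def)
    ultimately show ?thesis by (simp add: g_def)
  qed
  finally show ?thesis .
qed

lemma prod_lessThan_split_last: "1 \<le> (H::nat) \<Longrightarrow> (\<Prod>h<H. f h) = (\<Prod>h<H - 1. f h) * (f (H - 1) :: real)"
  by (cases H) auto

lemma sum_lessThan_split_last: "1 \<le> (H::nat) \<Longrightarrow> (\<Sum>h<H. f h) = (\<Sum>h<H - 1. f h) + (f (H - 1) :: real)"
  by (cases H) auto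

lemma traj_prob_lock_model_zero_traj:
  assumes code: "length code = H - 1" and H: "1 \<le> H"
  shows "traj_prob 2 H (lock_model H \<epsilon> code) \<pi> (zero_traj H \<pi> b)
       = obsk (lock_model H \<epsilon> code) (H - 1) (if played_code H \<pi> = code then 1 else 0) b"
proof -
  let ?M = "lock_model H \<epsilon> code"
  let ?o = "\<lambda>h. obsk ?M h (lock_state code (zero_traj H \<pi> b) h) (fst (zero_traj H \<pi> b ! h))"
  have "traj_prob 2 H ?M \<pi> (zero_traj H \<pi> b) = (\<Prod>h<H - 1. ?o h) * ?o (H - 1)"
    unfolding traj_prob_def pol_ind_zero_traj[OF H] traj_prob_minus_lock_model[OF H]
    by (simp only: prod_lessThan_split_last[OF H] mult_1)
  also have "(\<Prod>h<H - 1. ?o h) = 1"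
    by (rule prod.neutral) (auto simp: nth_zero_traj_less lock_model_def)
  also have "?o (H - 1) = obsk ?M (H - 1) (if played_code H \<pi> = code then 1 else 0) b"
    by (simp only: lock_state_zero_traj[OF code refl] nth_zero_traj_last[OF refl] fst_conv)
  finally show ?thesis by simp
qed

lemma traj_prob_lock_model_eq_zero:
  assumes \<tau>: "\<tau> \<in> trajs 2 A H" "\<tau> \<noteq> zero_traj H \<pi> 1" "\<tau> \<noteq> zero_traj H \<pi> 0" and H: "1 \<le> H"
  shows "traj_prob 2 H (lock_model H \<epsilon> code) \<pi> \<tau> = 0"
proof (cases "pol_ind H \<pi> \<tau> = 0")
  case False
  have len: "length \<tau> = H" and obs: "\<And>h. h < H \<Longrightarrow> fst (\<tau> ! h) < 2"
    using \<tau>(1) unfolding trajs_def by (auto simp: subset_iff in_set_conv_nth) (metis prod.collapse)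
  have follows: "\<pi> (take h \<tau>) (fst (\<tau> ! h)) = snd (\<tau> ! h)" if "h < H" for h
  proof (rule ccontr)
    assume "\<not> ?thesis"
    then have "pol_ind H \<pi> \<tau> = 0" unfolding pol_ind_def using that by (intro prod_zero) auto
    then show False using False by simp
  qed
  have "\<exists>h<H - 1. fst (\<tau> ! h) \<noteq> 0"
  proof (rule ccontr)
    assume "\<not> ?thesis"
    then have "\<tau> = zero_traj H \<pi> (fst (\<tau> ! (H - 1)))"
      by (intro consistent_traj_eq_zero_traj[OF len H follows]) auto
    moreover have "fst (\<tau> ! (H - 1)) < 2" using obs H by simp
    ultimately show False using \<tau>(2,3) by (cases "fst (\<tau> ! (H - 1))") (auto simp: less_Suc_eq)
  qed
  then obtain h where "h < H - 1" "fst (\<tau> ! h) \<noteq> 0" by blast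
  then have "(\<Prod>h<H. obsk (lock_model H \<epsilon> code) h (lock_state code \<tau> h) (fst (\<tau> ! h))) = 0"
    by (intro prod_zero) (auto intro!: bexI[of _ h] simp: lock_model_def)
  then show ?thesis by (simp add: traj_prob_def traj_prob_minus_lock_model[OF H])
qed (simp add: traj_prob_def)

text \<open>Seen through a policy, the combination lock is a Bernoulli bandit whose arms are the
  codes.\<close>

lemma traj_prob_lock_model:
  assumes \<pi>: "\<pi> \<in> policies A" and \<tau>: "\<tau> \<in> trajs 2 A H" and code: "length code = H - 1" and H: "1 \<le> H"
  shows "traj_prob 2 H (lock_model H \<epsilon> code) \<pi> \<tau> = final_obs_kernel H (lock_success H \<epsilon> code) \<pi> \<tau>"
proof -
  consider "\<tau> = zero_traj H \<pi> 1" | "\<tau> = zero_traj H \<pi> 0"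
    | "\<tau> \<noteq> zero_traj H \<pi> 1" "\<tau> \<noteq> zero_traj H \<pi> 0" by blast
  then show ?thesis
  proof cases
    case 1
    then show ?thesis using traj_prob_lock_model_zero_traj[OF code H, of \<epsilon> \<pi> 1]
      by (simp add: final_obs_kernel_zero_traj lock_success_def lock_model_def)
  next
    case 2
    then show ?thesis using traj_prob_lock_model_zero_traj[OF code H, of \<epsilon> \<pi> 0]
      by (simp add: final_obs_kernel_zero_traj lock_success_def lock_model_def)
  next
    case 3
    then show ?thesis
      using traj_prob_lock_model_eq_zero[OF \<tau> _ _ H] by (simp add: final_obs_kernel_def)
  qed
qed

lemma sum_final_obs_reward_zero_traj:
  "1 \<le> H \<Longrightarrow> (\<Sum>h<H. final_obs_reward H h (fst (zero_traj H \<pi> b ! h)) (snd (zero_traj H \<pi> b ! h)))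
     = (if b = 1 then 1 else 0)"
  by (subst sum_lessThan_split_last) (auto simp: final_obs_reward_def nth_zero_traj_last)

lemma pvalue_lock_model:
  assumes \<pi>: "\<pi> \<in> policies A" and code: "length code = H - 1" and H: "1 \<le> H"
  shows "pvalue 2 2 A H (final_obs_reward H) (lock_model H \<epsilon> code) \<pi> = lock_success H \<epsilon> code \<pi>"
proof -
  have "pvalue 2 2 A H (final_obs_reward H) (lock_model H \<epsilon> code) \<pi> =
     (\<Sum>\<tau>\<in>trajs 2 A H. final_obs_kernel H (lock_success H \<epsilon> code) \<pi> \<tau>
        * (\<Sum>h<H. final_obs_reward H h (fst (\<tau> ! h)) (snd (\<tau> ! h))))"
    unfolding pvalue_def by (rule sum.cong) (auto simp: traj_prob_lock_model[OF \<pi> _ code H])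
  also have "\<dots> = lock_success H \<epsilon> code \<pi>"
    by (simp add: sum_final_obs_kernel[OF \<pi> H] sum_final_obs_reward_zero_traj[OF H])
  finally show ?thesis .
qed

lemma code_policy_in_policies: "code \<in> codes A H \<Longrightarrow> 1 \<le> A \<Longrightarrow> code_policy H code \<in> policies A"
  unfolding policies_def code_policy_def codes_def by (auto simp: subset_iff)

lemma played_code_code_policy: "length code = H - 1 \<Longrightarrow> played_code H (code_policy H code) = code"
  unfolding played_code_def by (auto simp: list_eq_iff_nth_eq nth_zero_hist code_policy_def)

lemma opt_value_lock_model:
  assumes code: "code \<in> codes A H" and A: "1 \<le> A" and H: "1 \<le> H" and \<epsilon>: "0 \<le> \<epsilon>"
  shows "opt_value 2 2 A H (final_obs_reward H) (lock_model H \<epsilon> code) = 1/2 + \<epsilon>"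
proof -
  have len: "length code = H - 1" using code by (simp add: codes_def)
  have "opt_value 2 2 A H (final_obs_reward H) (lock_model H \<epsilon> code)
      = Sup (lock_success H \<epsilon> code ` policies A)"
    unfolding opt_value_def
    by (rule arg_cong[where f=Sup], rule image_cong) (auto simp: pvalue_lock_model[OF _ len H])
  also have "\<dots> = 1/2 + \<epsilon>"
  proof (rule cSup_eq_maximum)
    show "1/2 + \<epsilon> \<in> lock_success H \<epsilon> code ` policies A"
      using code_policy_in_policies[OF code A] played_code_code_policy[OF len]
      by (force simp: lock_success_def)
  qed (use \<epsilon> in \<open>auto simp: lock_success_def\<close>)
  finally show ?thesis .
qed

definition plays :: "nat \<Rightarrow> nat list \<Rightarrow> data \<Rightarrow> real" where
  "plays H code D = (\<Sum>x\<leftarrow>D. if played_code H (snd x) = code then 1 else 0)"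

lemma plays_bounds: "0 \<le> plays H code D \<and> plays H code D \<le> real (length D)"
  unfolding plays_def by (induction D) auto

lemma bounded_per_length_plays: "bounded_per_length (plays H code)"
  unfolding plays_def by (rule bounded_per_length_sum_list[where C=1]) auto

lemma sum_plays_le: "finite C \<Longrightarrow> (\<Sum>code\<in>C. plays H code D) \<le> real (length D)"
proof (induction D)
  case (Cons x D)
  have "(\<Sum>code\<in>C. if played_code H (snd x) = code then 1 else 0 :: real) \<le> 1"
    using Cons.prems by (simp add: sum.delta)
  then show ?case using Cons by (simp add: plays_def sum.distrib)
qed (simp add: plays_def)

lemma sum_run_expect_plays_le:
  assumes L: "learning_alg A \<phi>" and K: "traj_kernel A Tr P" and C: "finite C"
  shows "(\<Sum>code\<in>C. run_expect \<phi> Tr P (plays H code) n k []) \<le> real n"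
proof -
  have "(\<Sum>code\<in>C. run_expect \<phi> Tr P (plays H code) n k [])
      = run_expect \<phi> Tr P (\<lambda>D. \<Sum>code\<in>C. plays H code D) n k []"
    by (rule run_expect_sum[OF K L C bounded_per_length_plays, symmetric])
  also have "\<dots> \<le> run_expect \<phi> Tr P (\<lambda>D. real n) n k []"
    by (rule run_expect_mono[OF K L bounded_per_length_sum[OF C bounded_per_length_plays]
          bounded_per_length_const]) (use sum_plays_le[OF C] in force)
  also have "\<dots> = real n" by (rule run_expect_const[OF K L])
  finally show ?thesis .
qed

lemma regret_lock_model:
  assumes L: "learning_alg A \<phi>" and code: "code \<in> codes A H" and A: "1 \<le> A" and H: "1 \<le> H"
    and \<epsilon>: "0 \<le> \<epsilon>" "\<epsilon> \<le> 1/2"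
  shows "regret_from 2 2 A H (final_obs_reward H) (lock_model H \<epsilon> code) \<phi> K 1 []
     = 2 * \<epsilon> * real K
       - 2 * \<epsilon> * run_expect \<phi> (trajs 2 A H) (final_obs_kernel H (lock_success H \<epsilon> code)) (plays H code) K 1 []"
proof -
  let ?P = "final_obs_kernel H (lock_success H \<epsilon> code)"
  let ?g = "\<lambda>\<pi>. 2 * \<epsilon> * (if played_code H \<pi> = code then 0 else 1)"
  have len: "length code = H - 1" using code by (simp add: codes_def)
  have K: "traj_kernel A (trajs 2 A H) ?P"
    by (rule traj_kernel_final_obs_kernel) (use \<epsilon> H in \<open>auto simp: lock_success_def\<close>)
  have gap: "opt_value 2 2 A H (final_obs_reward H) (lock_model H \<epsilon> code)
      - pvalue 2 2 A H (final_obs_reward H) (lock_model H \<epsilon> code) \<pi> = ?g \<pi>"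
    if "\<pi> \<in> policies A" for \<pi>
    using opt_value_lock_model[OF code A H \<epsilon>(1)] pvalue_lock_model[OF that len H]
    by (simp add: lock_success_def)
  have "regret_from 2 2 A H (final_obs_reward H) (lock_model H \<epsilon> code) \<phi> K 1 [] + (\<Sum>x\<leftarrow>([] :: data). ?g (snd x))
      = run_expect \<phi> (trajs 2 A H) ?P (\<lambda>D. \<Sum>x\<leftarrow>D. ?g (snd x)) K 1 []"
  proof (rule regret_from_eq_run_expect[OF K L _ gap])
    show "traj_prob 2 H (lock_model H \<epsilon> code) \<pi> \<tau> = ?P \<pi> \<tau>"
      if "\<pi> \<in> policies A" "\<tau> \<in> trajs 2 A H" for \<pi> \<tau>
      using traj_prob_lock_model[OF that len H] .
    show "\<bar>?g \<pi>\<bar> \<le> 2 * \<epsilon>" for \<pi> using \<epsilon> by simp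
  qed
  then have "regret_from 2 2 A H (final_obs_reward H) (lock_model H \<epsilon> code) \<phi> K 1 []
      = run_expect \<phi> (trajs 2 A H) ?P (\<lambda>D. \<Sum>x\<leftarrow>D. ?g (snd x)) K 1 []"
    by simp
  also have "\<dots> = run_expect \<phi> (trajs 2 A H) ?P (\<lambda>D. 2 * \<epsilon> * real K + (- 2 * \<epsilon>) * plays H code D) K 1 []"
  proof (rule run_expect_cong)
    show "(\<Sum>x\<leftarrow>D. ?g (snd x)) = 2 * \<epsilon> * real K + (- 2 * \<epsilon>) * plays H code D"
      if "length D = length [] + K" for D :: data
      using that by (induction D arbitrary: K) (auto simp: plays_def algebra_simps)
  qed
  also have "\<dots> = 2 * \<epsilon> * real K - 2 * \<epsilon> * run_expect \<phi> (trajs 2 A H) ?P (plays H code) K 1 []"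
    by (simp only: run_expect_add[OF K L bounded_per_length_const bounded_per_length_cmult[OF
          bounded_per_length_plays]] run_expect_const[OF K L] run_expect_cmult)
  finally show ?thesis .
qed

section \<open>Change of measure for the final observation\<close>

definition kl_bern :: "real \<Rightarrow> real \<Rightarrow> real" where
  "kl_bern p q = p * ln (p / q) + (1 - p) * ln ((1 - p) / (1 - q))"

definition final_obs_ratio :: "nat \<Rightarrow> (policy \<Rightarrow> real) \<Rightarrow> real \<Rightarrow> policy \<Rightarrow> traj \<Rightarrow> real" where
  "final_obs_ratio H q q0 \<pi> \<tau> = (if \<tau> = zero_traj H \<pi> 1 then q \<pi> / q0
      else if \<tau> = zero_traj H \<pi> 0 then (1 - q \<pi>) / (1 - q0) else 1)"

lemma abs_ln_divide_commute: "0 < x \<Longrightarrow> 0 < y \<Longrightarrow> \<bar>ln (x / y)\<bar> = \<bar>ln (y / x :: real)\<bar>"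
  by (simp add: ln_div abs_minus_commute)

lemma abs_kl_bern_le:
  assumes "0 < p" "p < 1" "0 < q" "q < 1"
  shows "\<bar>kl_bern p q\<bar> \<le> \<bar>ln (q / p)\<bar> + \<bar>ln ((1 - q) / (1 - p))\<bar>"
proof -
  have "\<bar>kl_bern p q\<bar> \<le> \<bar>p * ln (p / q)\<bar> + \<bar>(1 - p) * ln ((1 - p) / (1 - q))\<bar>"
    unfolding kl_bern_def by (rule abs_triangle_ineq)
  also have "\<dots> = p * \<bar>ln (q / p)\<bar> + (1 - p) * \<bar>ln ((1 - q) / (1 - p))\<bar>"
    using assms by (simp add: abs_mult abs_ln_divide_commute)
  also have "\<dots> \<le> \<bar>ln (q / p)\<bar> + \<bar>ln ((1 - q) / (1 - p))\<bar>"
    using assms by (intro add_mono mult_left_le_one_le) auto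
  finally show ?thesis .
qed

lemma final_obs_kernel_eq_mult_ratio:
  "q0 \<noteq> 0 \<Longrightarrow> q0 \<noteq> 1 \<Longrightarrow>
    final_obs_kernel H q \<pi> \<tau> = final_obs_kernel H (\<lambda>_. q0) \<pi> \<tau> * final_obs_ratio H q q0 \<pi> \<tau>"
  by (simp add: final_obs_kernel_def final_obs_ratio_def zero_traj_eq_iff)

lemma sum_final_obs_kernel_ln_ratio:
  assumes "\<pi> \<in> policies A" "1 \<le> H" "0 < q \<pi>" "q \<pi> < 1" "0 < q0" "q0 < 1"
  shows "(\<Sum>\<tau>\<in>trajs 2 A H. final_obs_kernel H (\<lambda>_. q0) \<pi> \<tau> * ln (final_obs_ratio H q q0 \<pi> \<tau>))
       = - kl_bern q0 (q \<pi>)"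
  using sum_final_obs_kernel[OF assms(1,2), of "\<lambda>_. q0" "\<lambda>\<tau>. ln (final_obs_ratio H q q0 \<pi> \<tau>)"] assms
  by (simp add: kl_bern_def final_obs_ratio_def zero_traj_eq_iff ln_div algebra_simps)

lemma abs_ln_final_obs_ratio_le:
  assumes "finite Q" "q \<pi> \<in> Q"
  shows "\<bar>ln (final_obs_ratio H q q0 \<pi> \<tau>)\<bar> \<le> (\<Sum>x\<in>Q. \<bar>ln (x / q0)\<bar> + \<bar>ln ((1 - x) / (1 - q0))\<bar>)"
proof -
  have "\<bar>ln (q \<pi> / q0)\<bar> + \<bar>ln ((1 - q \<pi>) / (1 - q0))\<bar>
      \<le> (\<Sum>x\<in>Q. \<bar>ln (x / q0)\<bar> + \<bar>ln ((1 - x) / (1 - q0))\<bar>)"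
    by (rule member_le_sum[OF assms(2) _ assms(1)]) simp
  then show ?thesis by (auto simp: final_obs_ratio_def)
qed

text \<open>The finite value set \<open>Q\<close> only serves to bound the log-likelihood ratio.\<close>

lemma run_expect_final_obs_kernel_le:
  assumes L: "learning_alg A \<phi>" and H: "1 \<le> H"
    and Q: "finite Q" "Q \<subseteq> {0<..<1}" "\<And>\<pi>. q \<pi> \<in> Q" and q0: "0 < q0" "q0 < 1"
    and f: "bounded_per_length f" "\<And>D. length D = n \<Longrightarrow> 0 \<le> f D \<and> f D \<le> M"
    and c: "0 < c"
  shows "run_expect \<phi> (trajs 2 A H) (final_obs_kernel H q) f n k []
     \<le> run_expect \<phi> (trajs 2 A H) (final_obs_kernel H (\<lambda>_. q0)) f n k []
       + M/2 * (run_expect \<phi> (trajs 2 A H) (final_obs_kernel H (\<lambda>_. q0))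
                  (\<lambda>D. \<Sum>x\<leftarrow>D. kl_bern q0 (q (snd x))) n k [] / (2 * c) + 2 * c)"
proof -
  let ?Tr = "trajs 2 A H"
  let ?P0 = "final_obs_kernel H (\<lambda>_. q0)"
  let ?E0 = "\<lambda>g. run_expect \<phi> ?Tr ?P0 g n k []"
  let ?\<rho> = "final_obs_ratio H q q0"
  let ?C = "\<Sum>x\<in>Q. \<bar>ln (x / q0)\<bar> + \<bar>ln ((1 - x) / (1 - q0))\<bar>"
  have q: "0 < q \<pi>" "q \<pi> < 1" for \<pi> using Q(2) Q(3)[of \<pi>] by auto
  have K0: "traj_kernel A ?Tr ?P0" by (rule traj_kernel_final_obs_kernel) (use q0 H in auto)
  have K: "traj_kernel A ?Tr (final_obs_kernel H q)"
    by (rule traj_kernel_final_obs_kernel) (use q H in \<open>auto simp: less_imp_le\<close>)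
  have \<rho>: "0 < ?\<rho> \<pi> \<tau>" "\<bar>ln (?\<rho> \<pi> \<tau>)\<bar> \<le> ?C" for \<pi> \<tau>
    using q[of \<pi>] q0 abs_ln_final_obs_ratio_le[where q=q, OF Q(1) Q(3)]
    by (simp_all add: final_obs_ratio_def)
  have kl: "\<bar>- kl_bern q0 (q \<pi>)\<bar> \<le> ?C" for \<pi>
  proof -
    have "\<bar>ln (q \<pi> / q0)\<bar> + \<bar>ln ((1 - q \<pi>) / (1 - q0))\<bar> \<le> ?C"
      by (rule member_le_sum[OF Q(3) _ Q(1)]) simp
    then show ?thesis using abs_kl_bern_le[OF q0 q[of \<pi>]] by simp
  qed
  have kl_eq: "- kl_bern q0 (q \<pi>) = (\<Sum>\<tau>\<in>?Tr. ?P0 \<pi> \<tau> * ln (?\<rho> (snd (\<tau>, \<pi>)) (fst (\<tau>, \<pi>))))"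
    if "\<pi> \<in> policies A" for \<pi>
    using sum_final_obs_kernel_ln_ratio[OF that H q q0] by simp
  have "run_expect \<phi> ?Tr (final_obs_kernel H q) f n k []
      \<le> ?E0 f + M/2 * (- ?E0 (\<lambda>D. \<Sum>x\<leftarrow>D. ln (?\<rho> (snd x) (fst x))) / (2 * c) + 2 * c)"
    using q0 by (intro run_expect_change_of_measure_le[OF K0 K L \<rho> _ f c] final_obs_kernel_eq_mult_ratio) auto
  also have "?E0 (\<lambda>D. \<Sum>x\<leftarrow>D. ln (?\<rho> (snd x) (fst x))) = ?E0 (\<lambda>D. \<Sum>x\<leftarrow>D. - kl_bern q0 (q (snd x)))"
    using run_expect_sum_list_conditional[OF K0 L \<rho>(2) kl kl_eq, of n k "[]"] by simp
  also have "\<dots> = - ?E0 (\<lambda>D. \<Sum>x\<leftarrow>D. kl_bern q0 (q (snd x)))"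
    using run_expect_cmult[where c="-1" and f="\<lambda>D. \<Sum>x\<leftarrow>D. kl_bern q0 (q (snd x))"]
    by (simp add: uminus_sum_list_map o_def)
  finally show ?thesis by simp
qed

section \<open>The lower bound\<close>

lemma kl_bern_self: "kl_bern p p = 0"
  by (simp add: kl_bern_def)

lemma kl_bern_swap:
  assumes "0 < \<epsilon>" "\<epsilon> < 1/2"
  shows "kl_bern (1/2 - \<epsilon>) (1/2 + \<epsilon>) = 2 * \<epsilon> * ln ((1/2 + \<epsilon>) / (1/2 - \<epsilon>))"
proof -
  have "ln ((1/2 - \<epsilon>) / (1/2 + \<epsilon>)) = - ln ((1/2 + \<epsilon>) / (1/2 - \<epsilon>))"
    using assms by (simp add: ln_div)
  then show ?thesis unfolding kl_bern_def by (simp add: algebra_simps)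
qed

lemma kl_bern_half:
  assumes "\<bar>e :: real\<bar> < 1/2"
  shows "kl_bern (1/2) (1/2 + e) = - ln (1 - 4 * e^2) / 2"
proof -
  have pos: "0 < 1 + 2 * e" "0 < 1 - 2 * e" using assms unfolding abs_less_iff by auto
  have "(1/2) / (1/2 + e) = 1 / (1 + 2 * e)" "(1 - 1/2) / (1 - (1/2 + e)) = 1 / (1 - 2 * e)"
    using pos by (simp_all add: field_simps)
  then have "kl_bern (1/2) (1/2 + e) = - (ln (1 + 2 * e) + ln (1 - 2 * e)) / 2"
    using pos by (simp add: kl_bern_def ln_div)
  also have "ln (1 + 2 * e) + ln (1 - 2 * e) = ln ((1 + 2 * e) * (1 - 2 * e))"
    using pos by (simp add: ln_mult)
  also have "(1 + 2 * e) * (1 - 2 * e) = 1 - 4 * e^2" by (simp add: power2_eq_square algebra_simps)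
  finally show ?thesis .
qed

lemma ln_ratio_le: "0 \<le> (\<epsilon>::real) \<Longrightarrow> \<epsilon> \<le> 1/10 \<Longrightarrow> ln ((1/2 + \<epsilon>) / (1/2 - \<epsilon>)) \<le> 5 * \<epsilon>"
proof -
  assume \<epsilon>: "0 \<le> \<epsilon>" "\<epsilon> \<le> 1/10"
  have "ln ((1/2 + \<epsilon>) / (1/2 - \<epsilon>)) \<le> (1/2 + \<epsilon>) / (1/2 - \<epsilon>) - 1"
    by (rule ln_le_minus_one) (use \<epsilon> in simp)
  also have "\<dots> = 2 * \<epsilon> / (1/2 - \<epsilon>)" using \<epsilon> by (simp add: field_simps)
  also have "\<dots> \<le> 2 * \<epsilon> / (2/5)" using \<epsilon> by (intro divide_left_mono) auto
  finally show ?thesis by simp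
qed

lemma kl_bern_swap_bounds:
  assumes "0 < \<epsilon>" "\<epsilon> \<le> 1/10"
  shows "0 \<le> kl_bern (1/2 - \<epsilon>) (1/2 + \<epsilon>)" "kl_bern (1/2 - \<epsilon>) (1/2 + \<epsilon>) \<le> 10 * \<epsilon>^2"
proof -
  have "0 \<le> ln ((1/2 + \<epsilon>) / (1/2 - \<epsilon>))" using assms by simp
  then show "0 \<le> kl_bern (1/2 - \<epsilon>) (1/2 + \<epsilon>)" "kl_bern (1/2 - \<epsilon>) (1/2 + \<epsilon>) \<le> 10 * \<epsilon>^2"
    using kl_bern_swap[of \<epsilon>] ln_ratio_le[of \<epsilon>] assms by (auto simp: power2_eq_square)
qed

lemma minus_ln_one_minus_le: "0 \<le> (x::real) \<Longrightarrow> x < 1 \<Longrightarrow> - ln (1 - x) \<le> x / (1 - x)"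
  using ln_le_minus_one[of "1 / (1 - x)"] by (simp add: ln_div field_simps)

lemma kl_bern_half_le:
  assumes "x = 4 * e^2" "x < 1"
  shows "kl_bern (1/2) (1/2 + e) \<le> x / (2 * (1 - x))"
proof -
  have "\<bar>e\<bar>^2 < (1/2)^2" using assms by (simp add: power2_eq_square)
  then have "\<bar>e\<bar> < 1/2" by (rule power_less_imp_less_base) simp
  then have "kl_bern (1/2) (1/2 + e) = - ln (1 - x) / 2" using assms(1) by (simp add: kl_bern_half)
  also have "\<dots> \<le> x / (2 * (1 - x))"
    using divide_right_mono[OF minus_ln_one_minus_le[of x], of 2] assms by simp
  finally show ?thesis .
qed

lemma lock_plays_le:
  assumes L: "learning_alg A \<phi>" and H: "1 \<le> H" and \<epsilon>: "0 < \<epsilon>" "\<epsilon> < 1/2"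
    and q0: "0 < q0" "q0 < 1" and c: "0 < c"
  shows "run_expect \<phi> (trajs 2 A H) (final_obs_kernel H (lock_success H \<epsilon> code)) (plays H code) K k []
    \<le> run_expect \<phi> (trajs 2 A H) (final_obs_kernel H (\<lambda>_. q0)) (plays H code) K k []
      + real K / 2 * (run_expect \<phi> (trajs 2 A H) (final_obs_kernel H (\<lambda>_. q0))
          (\<lambda>D. \<Sum>x\<leftarrow>D. kl_bern q0 (lock_success H \<epsilon> code (snd x))) K k [] / (2 * c) + 2 * c)"
  by (rule run_expect_final_obs_kernel_le[OF L H, where Q="{1/2 - \<epsilon>, 1/2 + \<epsilon>}"])
     (use \<epsilon> q0 c plays_bounds in \<open>auto simp: lock_success_def bounded_per_length_plays\<close>)

lemma finite_codes: "finite (codes A H)"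
  unfolding codes_def by (rule finite_lists_length_eq) auto

lemma card_codes: "card (codes A H) = A ^ (H - 1)"
  unfolding codes_def using card_lists_length_eq[of "{0..<A}" "H - 1"] by simp

lemma codes_nonempty: "1 \<le> A \<Longrightarrow> codes A H \<noteq> {}"
  unfolding codes_def by (auto intro!: exI[of _ "replicate (H - 1) 0"])

text \<open>Codes are encoded as parameters by \<open>to_nat\<close>; the prior is uniform on them.\<close>

lemma BReg_lock_model:
  assumes L: "learning_alg A \<phi>" and A: "1 \<le> A" and H: "1 \<le> H" and \<epsilon>: "0 \<le> \<epsilon>" "\<epsilon> \<le> 1/2"
  shows "BReg 2 2 A H (final_obs_reward H) (\<lambda>\<theta>. lock_model H \<epsilon> (from_nat \<theta>))
      (pmf_of_set (to_nat ` codes A H)) \<phi> K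
    = 2 * \<epsilon> * real K - 2 * \<epsilon> * (\<Sum>code\<in>codes A H. run_expect \<phi> (trajs 2 A H)
        (final_obs_kernel H (lock_success H \<epsilon> code)) (plays H code) K 1 []) / real (A ^ (H - 1))"
proof -
  let ?E = "\<lambda>code. run_expect \<phi> (trajs 2 A H) (final_obs_kernel H (lock_success H \<epsilon> code)) (plays H code) K 1 []"
  have inj: "inj_on to_nat (codes A H)" by (rule inj_onI) simp
  have fin: "finite (to_nat ` codes A H)" using finite_codes by simp
  have ne: "to_nat ` codes A H \<noteq> {}" using codes_nonempty[OF A] by simp
  define n where "n = real (A ^ (H - 1))"
  have n: "0 < n" using A unfolding n_def by simp
  have "BReg 2 2 A H (final_obs_reward H) (\<lambda>\<theta>. lock_model H \<epsilon> (from_nat \<theta>))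
      (pmf_of_set (to_nat ` codes A H)) \<phi> K
    = (\<Sum>code\<in>codes A H. regret_from 2 2 A H (final_obs_reward H) (lock_model H \<epsilon> code) \<phi> K 1 []) / n"
    unfolding BReg_def integral_pmf_of_set[OF ne fin] sum.reindex[OF inj] card_image[OF inj] card_codes
    by (simp add: n_def)
  also have "\<dots> = (\<Sum>code\<in>codes A H. 2 * \<epsilon> * real K - 2 * \<epsilon> * ?E code) / n"
    by (rule arg_cong[where f="\<lambda>x. x / _"], rule sum.cong[OF refl], rule regret_lock_model[OF L _ A H \<epsilon>])
  also have "\<dots> = (n * (2 * \<epsilon> * real K) - 2 * \<epsilon> * (\<Sum>code\<in>codes A H. ?E code)) / n"
    by (simp add: sum_subtractf sum_distrib_left[symmetric] card_codes n_def)
  also have "\<dots> = 2 * \<epsilon> * real K - 2 * \<epsilon> * (\<Sum>code\<in>codes A H. ?E code) / n"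
    using n by (simp add: diff_divide_distrib)
  finally show ?thesis unfolding n_def .
qed

lemma sum_le_of_le_affine:
  fixes e t :: "'a \<Rightarrow> real"
  assumes "finite C" "\<And>x. x \<in> C \<Longrightarrow> e x \<le> a * t x + b" "0 \<le> a" "sum t C \<le> s"
  shows "sum e C \<le> a * s + real (card C) * b"
proof -
  have "sum e C \<le> (\<Sum>x\<in>C. a * t x + b)" by (rule sum_mono) (rule assms(2))
  also have "\<dots> = a * sum t C + real (card C) * b" by (simp add: sum.distrib sum_distrib_left)
  also have "\<dots> \<le> a * s + real (card C) * b" using assms(3,4) by (simp add: mult_left_mono)
  finally show ?thesis .
qed

lemma BReg_lock_model_ge_affine:
  assumes L: "learning_alg A \<phi>" and A: "1 \<le> A" and H: "1 \<le> H"
    and \<epsilon>: "0 \<le> \<epsilon>" "\<epsilon> \<le> 1/2" and p: "0 \<le> p" "p \<le> 1" and a: "0 \<le> a"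
    and plays: "\<And>code. code \<in> codes A H \<Longrightarrow>
      run_expect \<phi> (trajs 2 A H) (final_obs_kernel H (lock_success H \<epsilon> code)) (plays H code) K 1 []
      \<le> a * run_expect \<phi> (trajs 2 A H) (final_obs_kernel H (\<lambda>_. p)) (plays H code) K 1 [] + b"
  shows "2 * \<epsilon> * real K - 2 * \<epsilon> * (a * real K + real (A ^ (H - 1)) * b) / real (A ^ (H - 1))
    \<le> BReg 2 2 A H (final_obs_reward H) (\<lambda>\<theta>. lock_model H \<epsilon> (from_nat \<theta>))
      (pmf_of_set (to_nat ` codes A H)) \<phi> K"
proof -
  have K0: "traj_kernel A (trajs 2 A H) (final_obs_kernel H (\<lambda>_. p))"
    by (rule traj_kernel_final_obs_kernel) (use p H in auto)
  have "(\<Sum>code\<in>codes A H. run_expect \<phi> (trajs 2 A H) (final_obs_kernel H (lock_success H \<epsilon> code))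
      (plays H code) K 1 []) \<le> a * real K + real (A ^ (H - 1)) * b"
    using sum_le_of_le_affine[OF finite_codes plays a sum_run_expect_plays_le[OF L K0 finite_codes]]
    by (simp add: card_codes)
  then show ?thesis
    unfolding BReg_lock_model[OF L A H \<epsilon>] using \<epsilon>
    by (intro diff_left_mono divide_right_mono mult_left_mono) auto
qed

lemma lock_plays_le_losing_reference:
  assumes L: "learning_alg A \<phi>" and H: "1 \<le> H" and \<epsilon>: "0 < \<epsilon>" "\<epsilon> < 1/2"
  shows "run_expect \<phi> (trajs 2 A H) (final_obs_kernel H (lock_success H \<epsilon> code)) (plays H code) K k []
    \<le> (1 + 3/2 * real K * kl_bern (1/2 - \<epsilon>) (1/2 + \<epsilon>))
        * run_expect \<phi> (trajs 2 A H) (final_obs_kernel H (\<lambda>_. 1/2 - \<epsilon>)) (plays H code) K k []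
      + real K / 6"
proof -
  let ?P0 = "final_obs_kernel H (\<lambda>_. 1/2 - \<epsilon>)"
  have "(\<lambda>D. \<Sum>x\<leftarrow>D. kl_bern (1/2 - \<epsilon>) (lock_success H \<epsilon> code (snd x)))
      = (\<lambda>D. kl_bern (1/2 - \<epsilon>) (1/2 + \<epsilon>) * plays H code D)"
    by (auto simp: plays_def lock_success_def kl_bern_self sum_list_const_mult[symmetric]
        intro!: arg_cong[where f=sum_list])
  then have "run_expect \<phi> (trajs 2 A H) ?P0
      (\<lambda>D. \<Sum>x\<leftarrow>D. kl_bern (1/2 - \<epsilon>) (lock_success H \<epsilon> code (snd x))) K k []
      = kl_bern (1/2 - \<epsilon>) (1/2 + \<epsilon>) * run_expect \<phi> (trajs 2 A H) ?P0 (plays H code) K k []"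
    by (simp only: run_expect_cmult)
  then show ?thesis
    using lock_plays_le[OF L H \<epsilon>, of "1/2 - \<epsilon>" "1/6" code K k] \<epsilon> by (simp add: algebra_simps)
qed

lemma lock_plays_le_fair_reference:
  assumes L: "learning_alg A \<phi>" and H: "1 \<le> H" and \<epsilon>: "0 < \<epsilon>" "\<epsilon> < 1/2"
  shows "run_expect \<phi> (trajs 2 A H) (final_obs_kernel H (lock_success H \<epsilon> code)) (plays H code) K k []
    \<le> run_expect \<phi> (trajs 2 A H) (final_obs_kernel H (\<lambda>_. 1/2)) (plays H code) K k []
      + (2 * kl_bern (1/2) (1/2 + \<epsilon>) * real K ^ 2 + real K / 8)"
proof -
  let ?\<kappa> = "kl_bern (1/2) (1/2 + \<epsilon>)"
  have K0: "traj_kernel A (trajs 2 A H) (final_obs_kernel H (\<lambda>_. 1/2))"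
    by (rule traj_kernel_final_obs_kernel) (use H in auto)
  have "kl_bern (1/2) (lock_success H \<epsilon> code \<pi>) = ?\<kappa>" for \<pi>
    using kl_bern_half[of \<epsilon>] kl_bern_half[of "- \<epsilon>"] \<epsilon> unfolding lock_success_def by simp
  then have "run_expect \<phi> (trajs 2 A H) (final_obs_kernel H (\<lambda>_. 1/2))
      (\<lambda>D. \<Sum>x\<leftarrow>D. kl_bern (1/2) (lock_success H \<epsilon> code (snd x))) K k []
      = run_expect \<phi> (trajs 2 A H) (final_obs_kernel H (\<lambda>_. 1/2)) (\<lambda>D. ?\<kappa> * real K) K k []"
    by (intro run_expect_cong) (simp add: sum_list_triv)
  also have "\<dots> = ?\<kappa> * real K" by (rule run_expect_const[OF K0 L])
  finally show ?thesis
    using lock_plays_le[OF L H \<epsilon>, of "1/2" "1/8" code K k] by (simp add: algebra_simps power2_eq_square)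
qed

text \<open>For \<open>N \<ge> 3\<close> codes the reference model lets every code succeed with probability
  \<open>1/2 - \<epsilon>\<close>; it differs from the lock with \<open>code\<close> only in the episodes that play \<open>code\<close>.\<close>

lemma BReg_lock_model_ge_many:
  assumes L: "learning_alg A \<phi>" and A: "1 \<le> A" and H: "1 \<le> H"
    and N: "3 \<le> A ^ (H - 1)" "A ^ (H - 1) \<le> K"
    and \<epsilon>: "\<epsilon> = sqrt (real (A ^ (H - 1)) / real K) / 10"
  shows "1 / 20 * sqrt (real (A ^ (H - 1)) * real K) \<le> BReg 2 2 A H (final_obs_reward H)
      (\<lambda>\<theta>. lock_model H \<epsilon> (from_nat \<theta>)) (pmf_of_set (to_nat ` codes A H)) \<phi> K"
proof -
  define n where "n = real (A ^ (H - 1))"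
  define k where "k = real K"
  define \<kappa> where "\<kappa> = kl_bern (1/2 - \<epsilon>) (1/2 + \<epsilon>)"
  have n3: "3 \<le> n" and nk: "n \<le> k"
    using N unfolding n_def k_def by (metis of_nat_le_iff of_nat_numeral)+
  have \<epsilon>_pos: "0 < \<epsilon>" and \<epsilon>_le: "\<epsilon> \<le> 1/10" and \<epsilon>_sq: "\<epsilon>^2 = n / (100 * k)"
    using n3 nk unfolding \<epsilon> n_def[symmetric] k_def[symmetric] by (simp_all add: power_divide)
  have \<epsilon>k: "\<epsilon> * k = sqrt (n * k) / 10"
    using n3 nk unfolding \<epsilon> n_def[symmetric] k_def[symmetric]
    by (simp add: real_sqrt_divide real_sqrt_mult field_simps)
  have \<kappa>: "0 \<le> \<kappa>" "\<kappa> * k / n \<le> 1/10"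
    using kl_bern_swap_bounds[OF \<epsilon>_pos \<epsilon>_le] \<epsilon>_sq n3 nk unfolding \<kappa>_def by (simp_all add: field_simps)
  have "2 * \<epsilon> * k - 2 * \<epsilon> * ((1 + 3/2 * k * \<kappa>) * k + n * (k / 6)) / n
      \<le> BReg 2 2 A H (final_obs_reward H) (\<lambda>\<theta>. lock_model H \<epsilon> (from_nat \<theta>))
          (pmf_of_set (to_nat ` codes A H)) \<phi> K"
    unfolding n_def k_def
    using \<epsilon>_pos \<epsilon>_le \<kappa> nk n3
    by (intro BReg_lock_model_ge_affine[OF L A H, where p="1/2 - \<epsilon>"]
        lock_plays_le_losing_reference[OF L H \<epsilon>_pos, folded \<kappa>_def])
       (auto simp: k_def)
  moreover have "2 * \<epsilon> * (k * (7/20)) \<le> 2 * \<epsilon> * k - 2 * \<epsilon> * ((1 + 3/2 * k * \<kappa>) * k + n * (k / 6)) / n"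
  proof -
    have "((1 + 3/2 * k * \<kappa>) * k + n * (k / 6)) / n = k * (1 / n + 3/2 * (\<kappa> * k / n) + 1/6)"
      using n3 by (simp add: field_simps)
    also have "\<dots> \<le> k * (13/20)"
      using \<kappa> n3 nk by (intro mult_left_mono) (auto simp: field_simps)
    finally have "2 * \<epsilon> * (k * (7/20)) \<le> 2 * \<epsilon> * (k - ((1 + 3/2 * k * \<kappa>) * k + n * (k / 6)) / n)"
      using \<epsilon>_pos by (intro mult_left_mono) auto
    then show ?thesis by (simp add: right_diff_distrib)
  qed
  moreover have "1 / 20 * sqrt (n * k) \<le> 2 * \<epsilon> * (k * (7/20))"
  proof -
    have "1 / 20 * sqrt (n * k) = 1/2 * (\<epsilon> * k)" "2 * \<epsilon> * (k * (7/20)) = 7/10 * (\<epsilon> * k)"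
      using \<epsilon>k by simp_all
    moreover have "0 \<le> \<epsilon> * k" using \<epsilon>_pos n3 nk by simp
    ultimately show ?thesis by linarith
  qed
  ultimately show ?thesis unfolding n_def k_def by linarith
qed

text \<open>For \<open>N = 2\<close> codes the reference model succeeds with probability \<open>1/2\<close> for every policy.\<close>

lemma BReg_lock_model_ge_two:
  assumes L: "learning_alg A \<phi>" and A: "1 \<le> A" and H: "1 \<le> H"
    and N: "A ^ (H - 1) = 2" "2 \<le> K" and \<epsilon>: "\<epsilon> = 1 / (6 * sqrt (real K))"
  shows "1 / 20 * sqrt (real (A ^ (H - 1)) * real K) \<le> BReg 2 2 A H (final_obs_reward H)
      (\<lambda>\<theta>. lock_model H \<epsilon> (from_nat \<theta>)) (pmf_of_set (to_nat ` codes A H)) \<phi> K"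
proof -
  define k where "k = real K"
  define \<kappa> where "\<kappa> = kl_bern (1/2) (1/2 + \<epsilon>)"
  have k2: "2 \<le> k" using N unfolding k_def by simp
  have sk: "1 \<le> sqrt k" using k2 by simp
  have \<epsilon>_pos: "0 < \<epsilon>" and \<epsilon>_le: "\<epsilon> \<le> 1/6" using sk unfolding \<epsilon> k_def[symmetric] by (simp_all add: field_simps)
  have \<epsilon>_sq: "4 * \<epsilon>^2 = 1 / (9 * k)"
    using k2 unfolding \<epsilon> k_def[symmetric] by (simp add: power_divide power_mult_distrib)
  have \<epsilon>k: "\<epsilon> * k = sqrt k / 6"
    using k2 unfolding \<epsilon> k_def[symmetric] by (simp add: field_simps)
  have \<kappa>: "\<kappa> * k \<le> 1 / 17"
  proof -
    have "\<kappa> \<le> (1 / (9 * k)) / (2 * (1 - 1 / (9 * k)))"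
      unfolding \<kappa>_def using k2 by (intro kl_bern_half_le \<epsilon>_sq[symmetric]) (simp add: field_simps)
    then have "\<kappa> * k \<le> (1 / (9 * k)) / (2 * (1 - 1 / (9 * k))) * k"
      using k2 by (intro mult_right_mono) auto
    also have "\<dots> \<le> 1 / 17" using k2 by (simp add: field_simps)
    finally show ?thesis .
  qed
  have plays: "run_expect \<phi> (trajs 2 A H) (final_obs_kernel H (lock_success H \<epsilon> code)) (plays H code) K 1 []
      \<le> 1 * run_expect \<phi> (trajs 2 A H) (final_obs_kernel H (\<lambda>_. 1/2)) (plays H code) K 1 []
        + (2 * \<kappa> * k^2 + k / 8)" for code
    using lock_plays_le_fair_reference[OF L H \<epsilon>_pos, of code K 1] \<epsilon>_le unfolding \<kappa>_def k_def by simp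
  have "2 * \<epsilon> * k - 2 * \<epsilon> * (1 * k + 2 * (2 * \<kappa> * k^2 + k / 8)) / 2
      \<le> BReg 2 2 A H (final_obs_reward H) (\<lambda>\<theta>. lock_model H \<epsilon> (from_nat \<theta>))
          (pmf_of_set (to_nat ` codes A H)) \<phi> K"
    using BReg_lock_model_ge_affine[OF L A H _ _ _ _ _ plays, unfolded N(1)] \<epsilon>_pos \<epsilon>_le
    unfolding k_def by simp
  moreover have "\<epsilon> * k * (35/68) \<le> 2 * \<epsilon> * k - 2 * \<epsilon> * (1 * k + 2 * (2 * \<kappa> * k^2 + k / 8)) / 2"
  proof -
    have "2 * \<epsilon> * k - 2 * \<epsilon> * (1 * k + 2 * (2 * \<kappa> * k^2 + k / 8)) / 2 = \<epsilon> * k * (3/4 - 4 * (\<kappa> * k))"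
      by (simp add: power2_eq_square algebra_simps)
    moreover have "35/68 \<le> 3/4 - 4 * (\<kappa> * k)" using \<kappa> by simp
    then have "\<epsilon> * k * (35/68) \<le> \<epsilon> * k * (3/4 - 4 * (\<kappa> * k))"
      using \<epsilon>_pos k2 by (intro mult_left_mono) auto
    ultimately show ?thesis by simp
  qed
  moreover have "1 / 20 * sqrt (2 * k) \<le> \<epsilon> * k * (35/68)"
  proof -
    have "sqrt 2 \<le> 3/2" by (rule real_le_lsqrt) (auto simp: power2_eq_square)
    then have "sqrt (2 * k) \<le> 3/2 * sqrt k" using sk by (simp add: real_sqrt_mult mult_right_mono)
    then show ?thesis unfolding \<epsilon>k using sk by linarith
  qed
  moreover have "1 / 20 * sqrt (real (A ^ (H - 1)) * real K) = 1 / 20 * sqrt (2 * k)"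
    unfolding N(1) k_def by simp
  ultimately show ?thesis by linarith
qed

definition lock_bias :: "nat \<Rightarrow> nat \<Rightarrow> real" where
  "lock_bias N K = (if N = 2 then 1 / (6 * sqrt (real K)) else sqrt (real N / real K) / 10)"

lemma lock_bias_bounds:
  assumes "2 \<le> N" "N \<le> K"
  shows "0 \<le> lock_bias N K" "lock_bias N K \<le> 1/2"
proof -
  show "0 \<le> lock_bias N K" unfolding lock_bias_def by simp
  have "1 / (6 * sqrt (real K)) \<le> 1/6" using assms by (simp add: field_simps)
  moreover have "sqrt (real N / real K) / 10 \<le> 1/10" using assms by simp
  ultimately show "lock_bias N K \<le> 1/2" unfolding lock_bias_def by argo
qed

lemma BReg_lock_model_ge:
  assumes L: "learning_alg A \<phi>" and A: "1 \<le> A" and H: "1 \<le> H"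
    and N: "2 \<le> A ^ (H - 1)" "A ^ (H - 1) \<le> K"
  shows "1 / 20 * sqrt (real (A ^ (H - 1)) * real K) \<le> BReg 2 2 A H (final_obs_reward H)
      (\<lambda>\<theta>. lock_model H (lock_bias (A ^ (H - 1)) K) (from_nat \<theta>)) (pmf_of_set (to_nat ` codes A H)) \<phi> K"
proof (cases "A ^ (H - 1) = 2")
  case True
  then show ?thesis
    by (intro BReg_lock_model_ge_two[OF L A H]) (use N in \<open>simp_all add: lock_bias_def\<close>)
next
  case False
  then show ?thesis
    by (intro BReg_lock_model_ge_many[OF L A H]) (use N in \<open>simp_all add: lock_bias_def\<close>)
qed

theorem proposition2:
  fixes A H K :: nat
  assumes "A \<ge> 2" and "H \<ge> 2" and "K \<ge> A ^ (H - 1)"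
  shows "\<exists>(r :: nat \<Rightarrow> nat \<Rightarrow> nat \<Rightarrow> real) (\<Theta> :: nat set) (par :: nat \<Rightarrow> model) (prior :: nat pmf).
           valid_rewards 2 A H r \<and>
           set_pmf prior \<subseteq> \<Theta> \<and>
           (\<forall>\<theta>\<in>\<Theta>. valid_model 2 2 A H (par \<theta>)) \<and>
           (\<forall>\<phi>. learning_alg A \<phi> \<longrightarrow>
              BReg 2 2 A H r par prior \<phi> K \<ge> 1 / 20 * sqrt (real (A ^ (H - 1)) * real K))"
proof -
  have A: "1 \<le> A" and H: "1 \<le> H" using assms by auto
  have "A ^ 1 \<le> A ^ (H - 1)" using assms by (intro power_increasing) auto
  then have N: "2 \<le> A ^ (H - 1)" using assms by simp
  have codes: "finite (to_nat ` codes A H)" "to_nat ` codes A H \<noteq> {}"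
    using finite_codes codes_nonempty[OF A] by auto
  show ?thesis
  proof (intro exI conjI ballI allI impI)
    show "valid_rewards 2 A H (final_obs_reward H)" by (rule valid_final_obs_reward)
    show "set_pmf (pmf_of_set (to_nat ` codes A H)) \<subseteq> to_nat ` codes A H" using codes by simp
    fix \<theta>
    show "valid_model 2 2 A H (lock_model H (lock_bias (A ^ (H - 1)) K) (from_nat \<theta>))"
      using lock_bias_bounds[OF N assms(3)] by (rule valid_lock_model)
  next
    fix \<phi> assume "learning_alg A \<phi>"
    then show "1 / 20 * sqrt (real (A ^ (H - 1)) * real K) \<le> BReg 2 2 A H (final_obs_reward H)
        (\<lambda>\<theta>. lock_model H (lock_bias (A ^ (H - 1)) K) (from_nat \<theta>)) (pmf_of_set (to_nat ` codes A H)) \<phi> K"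
      by (rule BReg_lock_model_ge[OF _ A H N assms(3)])
  qed
qed

end
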